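(* Let $n=4$ and let $M$ be a $2\times 2$ Griffiths positive matrix of constant coefficient $(1,1)$-forms on $\mathbb{C}^4$ with diagonalized entries. Then $\Omega=\det(M)$ is a Lefschetz form for the bidegrees $(2,0)$, $(1,1)$ and $(0,2)$.
   Context: $V^{p,q}$ is the space of constant coefficient $(p,q)$-forms on $\mathbb{C}^n$. A $(1,1)$-form is Kähler if it equals $\sum_l\frac{\sqrt{-1}}{2}dw_l\wedge d\overline{w_l}$ in some complex linear coordinates. A matrix $M=(\alpha_{i,j})$ of $(1,1)$-forms with $\alpha_{i,j}=\overline{\alpha_{j,i}}$ is Griffiths positive if $\sum_{i,j}\theta_i\alpha_{i,j}\overline{\theta_j}$ is Kähler for every nonzero $\theta$. $M$ has diagonalized entries if in some complex linear coordinates $(z_l)$ every entry is $\sum_l b_{i,j}^{(l)}\frac{\sqrt{-1}}{2}dz_l\wedge d\overline{z_l}$. $\det(M)=\alpha_{1,1}\wedge\alpha_{2,2}-\alpha_{1,2}\wedge\alpha_{2,1}$. $\Omega\in V^{k,k}$ is a Lefschetz form for bidegree $(p,q)$, $p+q=n-k$, if $\alpha\mapsto\alpha\wedge\Omega$ is an isomorphism $V^{p,q}\to V^{n-q,n-p}$. *)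

theory Defs
  imports Complex_Main
begin

text \<open>Constant coefficient forms on C^n, as elements of the exterior algebra
 generated by dz_0,...,dz_(n-1) (index j) and dzbar_0,...,dzbar_(n-1) (index n+j).
 A form is its coefficient function on (increasingly ordered) finite index sets.\<close>

type_synonym form = "nat set \<Rightarrow> complex"

definition wsign :: "nat set \<Rightarrow> nat set \<Rightarrow> complex" where
  "wsign A B = (-1) ^ card {(a, b). a \<in> A \<and> b \<in> B \<and> b < a}"

definition wedge :: "form \<Rightarrow> form \<Rightarrow> form" where
  "wedge a b = (\<lambda>S. \<Sum>T\<in>Pow S. wsign T (S - T) * a T * b (S - T))"

definition Vpq :: "nat \<Rightarrow> nat \<Rightarrow> nat \<Rightarrow> form set" where
  "Vpq n p q = {\<omega>. \<forall>S. \<omega> S \<noteq> 0 \<longrightarrow>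
      S \<subseteq> {..<2*n} \<and> card (S \<inter> {..<n}) = p \<and> card (S \<inter> {n..<2*n}) = q}"

text \<open>complex conjugation of forms: swaps dz_j and dzbar_j\<close>
definition cswap :: "nat \<Rightarrow> nat \<Rightarrow> nat" where
  "cswap n i = (if i < n then i + n else if i < 2*n then i - n else i)"

definition conj_form :: "nat \<Rightarrow> form \<Rightarrow> form" where
  "conj_form n \<omega> = (\<lambda>S. let T = cswap n ` S in
     (-1) ^ card {(a, b). a \<in> T \<and> b \<in> T \<and> a < b \<and> cswap n b < cswap n a} * cnj (\<omega> T))"

definition dZ :: "nat \<Rightarrow> (nat \<Rightarrow> complex) \<Rightarrow> form" where
  "dZ n c = (\<lambda>S. \<Sum>j<n. if S = {j} then c j else 0)"

definition dZbar :: "nat \<Rightarrow> (nat \<Rightarrow> complex) \<Rightarrow> form" where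
  "dZbar n c = (\<lambda>S. \<Sum>j<n. if S = {n + j} then c j else 0)"

definition invertible_mat :: "nat \<Rightarrow> (nat \<Rightarrow> nat \<Rightarrow> complex) \<Rightarrow> bool" where
  "invertible_mat n A \<longleftrightarrow> (\<exists>B. \<forall>i<n. \<forall>j<n.
     (\<Sum>k<n. A i k * B k j) = (if i = j then 1 else 0))"

text \<open>In linear coordinates w_l = sum_j A l j z_j: the form sum_l b_l (i/2) dw_l /\ dwbar_l\<close>
definition diag_form :: "nat \<Rightarrow> (nat \<Rightarrow> nat \<Rightarrow> complex) \<Rightarrow> (nat \<Rightarrow> complex) \<Rightarrow> form" where
  "diag_form n A b = (\<lambda>S. \<Sum>l<n. b l * (\<i> / 2) *
      wedge (dZ n (A l)) (dZbar n (\<lambda>j. cnj (A l j))) S)"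

definition kahler :: "nat \<Rightarrow> form \<Rightarrow> bool" where
  "kahler n \<alpha> \<longleftrightarrow> (\<exists>A. invertible_mat n A \<and> \<alpha> = diag_form n A (\<lambda>_. 1))"

definition form_matrix2 :: "nat \<Rightarrow> (nat \<Rightarrow> nat \<Rightarrow> form) \<Rightarrow> bool" where
  "form_matrix2 n M \<longleftrightarrow> (\<forall>i<2. \<forall>j<2. M i j \<in> Vpq n 1 1 \<and> M i j = conj_form n (M j i))"

definition griffiths_positive :: "nat \<Rightarrow> (nat \<Rightarrow> nat \<Rightarrow> form) \<Rightarrow> bool" where
  "griffiths_positive n M \<longleftrightarrow> (\<forall>\<theta> :: nat \<Rightarrow> complex. (\<exists>i<2. \<theta> i \<noteq> 0) \<longrightarrow>
      kahler n (\<lambda>S. \<Sum>i<2. \<Sum>j<2. \<theta> i * M i j S * cnj (\<theta> j)))"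

definition diagonalized_entries :: "nat \<Rightarrow> (nat \<Rightarrow> nat \<Rightarrow> form) \<Rightarrow> bool" where
  "diagonalized_entries n M \<longleftrightarrow> (\<exists>A b. invertible_mat n A \<and>
      (\<forall>i<2. \<forall>j<2. M i j = diag_form n A (b i j)))"

definition det2 :: "(nat \<Rightarrow> nat \<Rightarrow> form) \<Rightarrow> form" where
  "det2 M = (\<lambda>S. wedge (M 0 0) (M 1 1) S - wedge (M 0 1) (M 1 0) S)"

definition lefschetz :: "nat \<Rightarrow> nat \<Rightarrow> form \<Rightarrow> nat \<Rightarrow> nat \<Rightarrow> bool" where
  "lefschetz n k \<Omega> p q \<longleftrightarrow> \<Omega> \<in> Vpq n k k \<and> p + q = n - k \<and>
     bij_betw (\<lambda>\<alpha>. wedge \<alpha> \<Omega>) (Vpq n p q) (Vpq n (n - q) (n - p))"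

end

(* A linear change of coordinates acts on constant coefficient forms by an algebra
   automorphism preserving bidegrees, so it suffices to treat the diagonal case
   M_ij = sum_l b_ij(l) (i/2) dz_l /\ dzbar_l. Griffiths positivity makes each 2 x 2 matrix
   (b_ij(l)) positive definite Hermitian, i.e. a timelike vector v_l for the Minkowski form
   whose quadratic form is the determinant. Then det M is a combination of the basis forms
   dz_l /\ dzbar_l /\ dz_m /\ dzbar_m (l < m) with coefficients c_lm = <v_l, v_m> / 2,
   which are nonzero by the reverse Cauchy-Schwarz inequality. Wedging with det M multiplies
   each basis coordinate of a (2,0)-, (0,2)- or off-diagonal (1,1)-form by a single c_lm;
   on the span of the dz_l /\ dzbar_l it acts by the hollow symmetric matrix (c_lm). That
   matrix is nonsingular: for a kernel vector z and w = sum z_l v_l one gets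
   <w, w> = sum z_l^2 <v_l, v_l> >= 0, while reverse Cauchy-Schwarz gives
   <w, w> <= z_l^2 <v_l, v_l> for each l, which forces z = 0. *)

theory Submission
  imports Defs "Jordan_Normal_Form.Determinant"
begin

hide_const (open) Matrix.invertible_mat

section \<open>The exterior algebra on finite index sets\<close>

definition basis_form :: "nat set \<Rightarrow> form" where
  "basis_form T = (\<lambda>S. if S = T then 1 else 0)"

definition inversions :: "nat set \<Rightarrow> nat set \<Rightarrow> (nat \<times> nat) set" where
  "inversions A B = {(a, b). a \<in> A \<and> b \<in> B \<and> b < a}"

definition elems_below :: "nat \<Rightarrow> nat set \<Rightarrow> nat set" where
  "elems_below a B = {b \<in> B. b < a}"

lemma elems_below_empty [simp]: "elems_below a {} = {}"
  by (simp add: elems_below_def)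

lemma elems_below_insert [simp]:
  "elems_below a (insert x B) = (if x < a then insert x (elems_below a B) else elems_below a B)"
  by (auto simp: elems_below_def)

lemma wsign_eq_inversions: "wsign A B = (-1) ^ card (inversions A B)"
  by (simp add: wsign_def inversions_def)

lemma finite_inversions: "finite A \<Longrightarrow> finite B \<Longrightarrow> finite (inversions A B)"
  by (rule finite_subset[of _ "A \<times> B"]) (auto simp: inversions_def)

lemma wsign_empty_left [simp]: "wsign {} B = 1"
  by (simp add: wsign_def)

lemma wsign_empty_right [simp]: "wsign A {} = 1"
  by (simp add: wsign_def)

lemma wsign_Un_left:
  assumes "finite A" "finite A'" "finite B" "A \<inter> A' = {}"
  shows "wsign (A \<union> A') B = wsign A B * wsign A' B"
proof -
  have "inversions (A \<union> A') B = inversions A B \<union> inversions A' B"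
    and "inversions A B \<inter> inversions A' B = {}"
    using assms(4) by (auto simp: inversions_def)
  then show ?thesis
    by (simp add: wsign_eq_inversions card_Un_disjoint finite_inversions assms power_add)
qed

lemma wsign_Un_right:
  assumes "finite A" "finite B" "finite B'" "B \<inter> B' = {}"
  shows "wsign A (B \<union> B') = wsign A B * wsign A B'"
proof -
  have "inversions A (B \<union> B') = inversions A B \<union> inversions A B'"
    and "inversions A B \<inter> inversions A B' = {}"
    using assms(4) by (auto simp: inversions_def)
  then show ?thesis
    by (simp add: wsign_eq_inversions card_Un_disjoint finite_inversions assms power_add)
qed

lemma wsign_insert:
  assumes "a \<notin> A" "finite A" "finite B"
  shows "wsign (insert a A) B = (-1) ^ card (elems_below a B) * wsign A B"
proof -
  have "inversions {a} B = (\<lambda>b. (a, b)) ` elems_below a B"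
    by (auto simp: inversions_def elems_below_def)
  then have "wsign {a} B = (-1) ^ card (elems_below a B)"
    by (simp add: wsign_eq_inversions card_image inj_on_def)
  then show ?thesis
    using wsign_Un_left[of "{a}" A B] assms by simp
qed

lemma wsign_singletons_swap: "a \<noteq> b \<Longrightarrow> wsign {a} {b} = - wsign {b} {a}"
proof -
  assume "a \<noteq> b"
  then consider "a < b" | "b < a" by linarith
  then show ?thesis
  proof cases
    case 1
    then have "inversions {a} {b} = {}" "inversions {b} {a} = {(b, a)}" by (auto simp: inversions_def)
    then show ?thesis by (simp add: wsign_eq_inversions)
  next
    case 2
    then have "inversions {a} {b} = {(a, b)}" "inversions {b} {a} = {}" by (auto simp: inversions_def)
    then show ?thesis by (simp add: wsign_eq_inversions)
  qed
qed

lemma wedge_eq_zero_infinite: "infinite S \<Longrightarrow> wedge a b S = 0"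
  by (simp add: wedge_def)

text \<open>Both bracketings of a triple product expand to the same sum over ordered splittings
  \<open>S = R \<union> U \<union> (S - R - U)\<close>.\<close>

definition triple_term :: "form \<Rightarrow> form \<Rightarrow> form \<Rightarrow> nat set \<Rightarrow> nat set \<Rightarrow> nat set \<Rightarrow> complex" where
  "triple_term a b c S R U =
     wsign R U * wsign R (S - R - U) * wsign U (S - R - U) * a R * b U * c (S - R - U)"

lemma wedge_wedge_left_expand:
  assumes S: "finite S"
  shows "wedge (wedge a b) c S = (\<Sum>(R, U)\<in>Sigma (Pow S) (\<lambda>R. Pow (S - R)). triple_term a b c S R U)"
proof -
  have "wedge (wedge a b) c S = (\<Sum>T\<in>Pow S. \<Sum>R\<in>Pow T. triple_term a b c S R (T - R))"
    unfolding wedge_def sum_distrib_left sum_distrib_right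
  proof (intro sum.cong refl)
    fix T R assume "T \<in> Pow S" "R \<in> Pow T"
    then have T: "T \<subseteq> S" and R: "R \<subseteq> T" by auto
    have fin: "finite T" "finite R" using T R S by (auto dest: finite_subset)
    have "wsign (R \<union> (T - R)) (S - T) = wsign R (S - T) * wsign (T - R) (S - T)"
      by (rule wsign_Un_left) (use fin S in auto)
    moreover have "R \<union> (T - R) = T" "S - T = S - R - (T - R)" using R by blast+
    ultimately show "wsign T (S - T) * (wsign R (T - R) * a R * b (T - R)) * c (S - T)
        = triple_term a b c S R (T - R)"
      by (simp add: triple_term_def mult_ac)
  qed
  also have "\<dots> = (\<Sum>(T, R)\<in>Sigma (Pow S) Pow. triple_term a b c S R (T - R))"
    by (rule sum.Sigma) (use S finite_subset in auto)
  also have "\<dots> = (\<Sum>(R, U)\<in>Sigma (Pow S) (\<lambda>R. Pow (S - R)). triple_term a b c S R U)"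
    by (rule sum.reindex_bij_witness[where i = "\<lambda>(R, U). (R \<union> U, R)" and j = "\<lambda>(T, R). (R, T - R)"])
       (auto simp: Diff_Un)
  finally show ?thesis .
qed

lemma wedge_wedge_right_expand:
  assumes S: "finite S"
  shows "wedge a (wedge b c) S = (\<Sum>(R, U)\<in>Sigma (Pow S) (\<lambda>R. Pow (S - R)). triple_term a b c S R U)"
proof -
  have "wedge a (wedge b c) S = (\<Sum>R\<in>Pow S. \<Sum>U\<in>Pow (S - R). triple_term a b c S R U)"
    unfolding wedge_def sum_distrib_left sum_distrib_right
  proof (intro sum.cong refl)
    fix R U assume "R \<in> Pow S" "U \<in> Pow (S - R)"
    then have R: "R \<subseteq> S" and U: "U \<subseteq> S - R" by auto
    have fin: "finite R" "finite U" using U R S by (auto dest: finite_subset)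
    have "wsign R (U \<union> (S - R - U)) = wsign R U * wsign R (S - R - U)"
      by (rule wsign_Un_right) (use fin S in auto)
    moreover have "U \<union> (S - R - U) = S - R" using U by blast
    ultimately show "wsign R (S - R) * a R * (wsign U (S - R - U) * b U * c (S - R - U))
        = triple_term a b c S R U"
      by (simp add: triple_term_def mult_ac)
  qed
  also have "\<dots> = (\<Sum>(R, U)\<in>Sigma (Pow S) (\<lambda>R. Pow (S - R)). triple_term a b c S R U)"
    by (rule sum.Sigma) (use S in auto)
  finally show ?thesis .
qed

lemma wedge_assoc: "wedge (wedge a b) c = wedge a (wedge b c)"
proof
  fix S
  show "wedge (wedge a b) c S = wedge a (wedge b c) S"
    by (cases "finite S")
       (simp_all add: wedge_wedge_left_expand wedge_wedge_right_expand wedge_eq_zero_infinite)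
qed

lemma wedge_sum_left:
  "finite I \<Longrightarrow> wedge (\<lambda>S. \<Sum>i\<in>I. g i S) h S = (\<Sum>i\<in>I. wedge (g i) h S)"
  unfolding wedge_def by (simp add: sum_distrib_left sum_distrib_right sum.swap[of _ I])

lemma wedge_sum_right:
  "finite I \<Longrightarrow> wedge h (\<lambda>S. \<Sum>i\<in>I. g i S) S = (\<Sum>i\<in>I. wedge h (g i) S)"
  unfolding wedge_def by (simp add: sum_distrib_left sum_distrib_right sum.swap[of _ I])

lemma wedge_scale_left: "wedge (\<lambda>S. c * g S) h S = c * wedge g h S"
  unfolding wedge_def by (simp add: sum_distrib_left mult_ac)

lemma wedge_scale_right: "wedge h (\<lambda>S. c * g S) S = c * wedge h g S"
  unfolding wedge_def by (simp add: sum_distrib_left mult_ac)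

lemma wedge_diff_left: "wedge (\<lambda>S. a S - b S) h S = wedge a h S - wedge b h S"
  unfolding wedge_def by (simp add: left_diff_distrib right_diff_distrib sum_subtractf)

lemma wedge_uminus_left: "wedge (\<lambda>S. - a S) h S = - wedge a h S"
  unfolding wedge_def by (simp add: sum_negf)

lemma wedge_zero_left [simp]: "wedge (\<lambda>S. 0) h = (\<lambda>S. 0)"
  unfolding wedge_def by simp

lemma wedge_zero_right [simp]: "wedge h (\<lambda>S. 0) = (\<lambda>S. 0)"
  unfolding wedge_def by simp

lemma wedge_bilinear:
  assumes "finite I" "finite J"
  shows "wedge (\<lambda>S. \<Sum>l\<in>I. x l * E l S) (\<lambda>S. \<Sum>m\<in>J. y m * F m S) S
       = (\<Sum>l\<in>I. \<Sum>m\<in>J. x l * y m * wedge (E l) (F m) S)"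
  using assms
  by (simp add: wedge_sum_left wedge_sum_right wedge_scale_left wedge_scale_right sum_distrib_left mult_ac)

lemma wedge_basis_forms:
  assumes "finite T" "finite R"
  shows "wedge (basis_form T) (basis_form R) S = (if T \<inter> R = {} \<and> S = T \<union> R then wsign T R else 0)"
proof (cases "finite S")
  case True
  have "wedge (basis_form T) (basis_form R) S
      = (\<Sum>X\<in>Pow S. if X = T then (if S - T = R then wsign T R else 0) else 0)"
    unfolding wedge_def basis_form_def by (intro sum.cong) auto
  also have "\<dots> = (if T \<subseteq> S \<and> S - T = R then wsign T R else 0)"
    using True by (simp add: sum.delta)
  also have "\<dots> = (if T \<inter> R = {} \<and> S = T \<union> R then wsign T R else 0)"
    by (intro if_cong refl) auto
  finally show ?thesis .
next
  case False
  then show ?thesis using assms by (auto simp: wedge_def)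
qed

lemma wedge_basis_form_right:
  assumes "finite U"
  shows "wedge a (basis_form U) S = (if finite S \<and> U \<subseteq> S then wsign (S - U) U * a (S - U) else 0)"
proof (cases "finite S")
  case True
  have "wedge a (basis_form U) S
      = (\<Sum>T\<in>Pow S. if S - U = T \<and> U \<subseteq> S then wsign (S - U) U * a (S - U) else 0)"
    unfolding wedge_def basis_form_def
  proof (intro sum.cong refl)
    fix T assume "T \<in> Pow S"
    then have "(S - T = U) \<longleftrightarrow> (S - U = T \<and> U \<subseteq> S)" by auto
    then show "wsign T (S - T) * a T * (if S - T = U then 1 else 0)
        = (if S - U = T \<and> U \<subseteq> S then wsign (S - U) U * a (S - U) else 0)"
      by auto
  qed
  also have "\<dots> = (if U \<subseteq> S then wsign (S - U) U * a (S - U) else 0)"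
    by (cases "U \<subseteq> S") (simp_all add: sum.delta' True)
  finally show ?thesis using True by simp
next
  case False
  then show ?thesis by (simp add: wedge_def)
qed

definition finite_support :: "form \<Rightarrow> bool" where
  "finite_support a \<longleftrightarrow> (\<forall>S. infinite S \<longrightarrow> a S = 0)"

definition one_form :: "form \<Rightarrow> bool" where
  "one_form a \<longleftrightarrow> (\<forall>S. a S \<noteq> 0 \<longrightarrow> card S = 1)"

lemma finite_support_one_form: "one_form a \<Longrightarrow> finite_support a"
  by (auto simp: one_form_def finite_support_def)

lemma wedge_unit_left:
  assumes "finite_support a"
  shows "wedge (basis_form {}) a = a"
proof
  fix S
  show "wedge (basis_form {}) a S = a S"
  proof (cases "finite S")
    case True
    have "wedge (basis_form {}) a S = (\<Sum>T\<in>Pow S. if T = {} then a S else 0)"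
      unfolding wedge_def basis_form_def by (intro sum.cong) auto
    then show ?thesis using True by (simp add: sum.delta)
  next
    case False
    then show ?thesis using assms by (simp add: wedge_def finite_support_def)
  qed
qed

lemma wedge_unit_right:
  assumes "finite_support a"
  shows "wedge a (basis_form {}) = a"
proof
  fix S
  show "wedge a (basis_form {}) S = a S"
  proof (cases "finite S")
    case True
    have "wedge a (basis_form {}) S = (\<Sum>T\<in>Pow S. if T = S then a S else 0)"
      unfolding wedge_def basis_form_def by (intro sum.cong) auto
    then show ?thesis using True by (simp add: sum.delta)
  next
    case False
    then show ?thesis using assms by (simp add: wedge_def finite_support_def)
  qed
qed

lemma wedge_one_forms_doubleton:
  assumes f: "one_form f" and g: "one_form g" and ab: "a \<noteq> b"
  shows "wedge f g {a, b} = wsign {a} {b} * (f {a} * g {b} - f {b} * g {a})"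
proof -
  have "card {a, b} = 2" using ab by simp
  then have vanish: "f {} = 0" "g {} = 0" "f {a, b} = 0" "g {a, b} = 0"
    using f g unfolding one_form_def by (metis card.empty zero_neq_one, metis card.empty zero_neq_one,
      metis numeral_One numeral_eq_iff semiring_norm(85), metis numeral_One numeral_eq_iff semiring_norm(85))
  have "Pow {a, b} = {{}, {a}, {b}, {a, b}}" by (auto simp: Pow_insert)
  then have "wedge f g {a, b} = (\<Sum>T\<in>{{}, {a}, {b}, {a, b}}. wsign T ({a, b} - T) * f T * g ({a, b} - T))"
    unfolding wedge_def by simp
  also have "\<dots> = wsign {a} {b} * f {a} * g {b} + wsign {b} {a} * f {b} * g {a}"
    using ab by (simp add: vanish doubleton_eq_iff insert_Diff_if)
  finally show ?thesis using wsign_singletons_swap[OF ab] by (simp add: algebra_simps)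
qed

lemma wedge_one_forms_not_doubleton:
  assumes f: "one_form f" and g: "one_form g" and S: "\<nexists>a b. a \<noteq> b \<and> S = {a, b}"
  shows "wedge f g S = 0"
proof (cases "finite S")
  case True
  have "wsign T (S - T) * f T * g (S - T) = 0" if "T \<in> Pow S" for T
  proof (rule ccontr)
    assume "wsign T (S - T) * f T * g (S - T) \<noteq> 0"
    then have "card T = 1" "card (S - T) = 1" using f g unfolding one_form_def by auto
    then obtain x y where "T = {x}" "S - T = {y}" by (auto simp: card_1_singleton_iff)
    then show False using that S by auto
  qed
  then show ?thesis unfolding wedge_def by (intro sum.neutral) blast
next
  case False
  then show ?thesis by (simp add: wedge_def)
qed

lemma wedge_one_forms_anticomm:
  assumes "one_form f" "one_form g"
  shows "wedge f g S = - wedge g f S"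
proof (cases "\<exists>a b. a \<noteq> b \<and> S = {a, b}")
  case True
  then obtain a b where ab: "a \<noteq> b" "S = {a, b}" by blast
  have "wedge g f {a, b} = wsign {b} {a} * (g {b} * f {a} - g {a} * f {b})"
    using wedge_one_forms_doubleton[OF assms(2,1), of b a] ab by (simp add: insert_commute)
  then show ?thesis
    unfolding ab(2) wedge_one_forms_doubleton[OF assms ab(1)] wsign_singletons_swap[OF ab(1)]
    by (simp add: algebra_simps)
next
  case False
  then show ?thesis using wedge_one_forms_not_doubleton assms by simp
qed

lemma wedge_one_forms_swap:
  assumes "one_form f" "one_form g"
  shows "wedge f (wedge g h) S = - wedge g (wedge f h) S"
proof -
  have "wedge f g = (\<lambda>S. - wedge g f S)" using wedge_one_forms_anticomm[OF assms] by blast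
  then show ?thesis by (simp add: wedge_uminus_left flip: wedge_assoc)
qed

lemma wedge_one_form_self: "one_form f \<Longrightarrow> wedge f f = (\<lambda>S. 0)"
  using wedge_one_forms_anticomm[of f f] by fastforce

definition wedge_prod :: "(nat \<Rightarrow> form) \<Rightarrow> nat set \<Rightarrow> form" where
  "wedge_prod f T = foldr (\<lambda>j acc. wedge (f j) acc) (sorted_list_of_set T) (basis_form {})"

lemma wedge_prod_empty [simp]: "wedge_prod f {} = basis_form {}"
  by (simp add: wedge_prod_def)

lemma wedge_prod_insert_min:
  assumes "finite T" "\<forall>t\<in>T. m < t"
  shows "wedge_prod f (insert m T) = wedge (f m) (wedge_prod f T)"
proof -
  have "sorted_list_of_set (insert m T) = insort m (sorted_list_of_set T)"
    using assms by (subst sorted_list_of_set_insert) auto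
  also have "\<dots> = m # sorted_list_of_set T"
    using assms by (intro insort_is_Cons) (auto intro: less_imp_le)
  finally show ?thesis by (simp add: wedge_prod_def)
qed

lemma finite_support_wedge_prod: "finite T \<Longrightarrow> finite_support (wedge_prod f T)"
  by (induct T rule: finite_linorder_min_induct)
     (auto simp: wedge_prod_insert_min finite_support_def basis_form_def wedge_def)

lemma wedge_prod_singleton: "one_form (f m) \<Longrightarrow> wedge_prod f {m} = f m"
  using wedge_prod_insert_min[of "{}" m f] by (simp add: wedge_unit_right finite_support_one_form)

lemma wedge_prod_cong: "finite T \<Longrightarrow> (\<And>j. j \<in> T \<Longrightarrow> f j = g j) \<Longrightarrow> wedge_prod f T = wedge_prod g T"
  by (induct T rule: finite_linorder_min_induct) (auto simp: wedge_prod_insert_min)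

lemma wedge_prod_basis_forms: "finite T \<Longrightarrow> wedge_prod (\<lambda>j. basis_form {j}) T = basis_form T"
proof (induct T rule: finite_linorder_min_induct)
  case (insert m T)
  have "inversions {m} T = {}" "{m} \<inter> T = {}" using insert.hyps by (auto simp: inversions_def)
  then have "wsign {m} T = 1" "{m} \<inter> T = {}" by (simp_all add: wsign_eq_inversions)
  then have "wedge (basis_form {m}) (basis_form T) S = basis_form (insert m T) S" for S
    using insert.hyps(1) by (simp add: wedge_basis_forms) (auto simp: basis_form_def)
  then have "wedge (basis_form {m}) (basis_form T) = basis_form (insert m T)" ..
  then show ?case
    using insert by (simp add: wedge_prod_insert_min)
qed simp

lemma wedge_one_form_wedge_prod:
  assumes f: "\<forall>j. one_form (f j)" and U: "finite U"
  shows "wedge (f m) (wedge_prod f U) S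
       = (if m \<in> U then 0 else (-1) ^ card (elems_below m U) * wedge_prod f (insert m U) S)"
  using U
proof (induct U arbitrary: S rule: finite_linorder_min_induct)
  case empty
  then show ?case using f by (simp add: wedge_unit_right finite_support_one_form wedge_prod_singleton)
next
  case (insert u U)
  have prod: "wedge_prod f (insert u U) = wedge (f u) (wedge_prod f U)"
    using insert by (simp add: wedge_prod_insert_min)
  consider "m = u" | "m < u" | "u < m" by linarith
  then show ?case
  proof cases
    case 1
    then show ?thesis using f by (simp add: prod flip: wedge_assoc) (simp add: wedge_one_form_self)
  next
    case 2
    then have "elems_below m (insert u U) = {}" "m \<notin> insert u U"
      using insert.hyps by (auto simp: elems_below_def)
    moreover have "wedge_prod f (insert m (insert u U)) = wedge (f m) (wedge_prod f (insert u U))"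
      using insert.hyps 2 by (intro wedge_prod_insert_min) auto
    ultimately show ?thesis by simp
  next
    case 3
    have swap: "wedge (f m) (wedge_prod f (insert u U)) S = - wedge (f u) (wedge (f m) (wedge_prod f U)) S"
      unfolding prod by (rule wedge_one_forms_swap) (use f in auto)
    show ?thesis
    proof (cases "m \<in> U")
      case True
      then have "wedge (f m) (wedge_prod f U) = (\<lambda>S. 0)" using insert.hyps(3) by auto
      then show ?thesis using swap True by simp
    next
      case False
      have "wedge (f u) (wedge_prod f (insert m U)) = wedge_prod f (insert u (insert m U))"
        using insert.hyps 3 by (intro wedge_prod_insert_min[symmetric]) auto
      moreover have "wedge (f m) (wedge_prod f U)
          = (\<lambda>S. (-1) ^ card (elems_below m U) * wedge_prod f (insert m U) S)"
        using insert.hyps(3) False by auto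
      moreover have "u \<notin> elems_below m U" "finite (elems_below m U)"
        using insert.hyps by (auto simp: elems_below_def)
      then have "card (elems_below m (insert u U)) = Suc (card (elems_below m U))"
        using 3 by simp
      ultimately show ?thesis
        using swap False 3 by (simp add: wedge_scale_right insert_commute)
    qed
  qed
qed

lemma wedge_wedge_prods:
  assumes f: "\<forall>j. one_form (f j)" and T: "finite T" and R: "finite R"
  shows "wedge (wedge_prod f T) (wedge_prod f R) S
       = (if T \<inter> R = {} then wsign T R * wedge_prod f (T \<union> R) S else 0)"
  using T
proof (induct T arbitrary: S rule: finite_linorder_min_induct)
  case empty
  then show ?case using R by (simp add: wedge_unit_left finite_support_wedge_prod)
next
  case (insert m T)
  have IH: "wedge (wedge_prod f T) (wedge_prod f R)
      = (\<lambda>S. if T \<inter> R = {} then wsign T R * wedge_prod f (T \<union> R) S else 0)"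
    using insert by auto
  have m: "m \<notin> T" "elems_below m (T \<union> R) = elems_below m R"
    using insert.hyps by (auto simp: elems_below_def)
  have "wedge (wedge_prod f (insert m T)) (wedge_prod f R) S
      = wedge (f m) (wedge (wedge_prod f T) (wedge_prod f R)) S"
    using insert.hyps by (simp add: wedge_prod_insert_min wedge_assoc)
  also have "\<dots> = (if T \<inter> R = {} then wsign T R * wedge (f m) (wedge_prod f (T \<union> R)) S else 0)"
    unfolding IH by (simp add: wedge_scale_right)
  also have "\<dots> = (if insert m T \<inter> R = {} then wsign (insert m T) R * wedge_prod f (insert m T \<union> R) S else 0)"
    using m insert.hyps R by (simp add: wedge_one_form_wedge_prod[OF f] wsign_insert)
  finally show ?case .
qed

section \<open>Substitution of one-forms for the generators\<close>

text \<open>\<open>form_subst N f\<close> is the algebra endomorphism of the forms supported in \<open>{..<N}\<close> that sends the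
  generator with index \<open>j\<close> to the one-form \<open>f j\<close>; a linear change of coordinates acts this way.\<close>

definition bounded_form :: "nat \<Rightarrow> form \<Rightarrow> bool" where
  "bounded_form N a \<longleftrightarrow> (\<forall>S. a S \<noteq> 0 \<longrightarrow> S \<subseteq> {..<N})"

definition form_subst :: "nat \<Rightarrow> (nat \<Rightarrow> form) \<Rightarrow> form \<Rightarrow> form" where
  "form_subst N f a = (\<lambda>S. \<Sum>T\<in>Pow {..<N}. a T * wedge_prod f T S)"

lemma basis_form_expansion:
  assumes "bounded_form N a"
  shows "a = (\<lambda>S. \<Sum>T\<in>Pow {..<N}. a T * basis_form T S)"
proof
  fix S
  have "(\<Sum>T\<in>Pow {..<N}. a T * basis_form T S) = (\<Sum>T\<in>Pow {..<N}. if S = T then a S else 0)"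
    by (rule sum.cong) (auto simp: basis_form_def)
  also have "\<dots> = a S" using assms by (auto simp: bounded_form_def sum.delta')
  finally show "a S = (\<Sum>T\<in>Pow {..<N}. a T * basis_form T S)" by simp
qed

lemma bounded_form_wedge:
  assumes "bounded_form N a" "bounded_form N b"
  shows "bounded_form N (wedge a b)"
  unfolding bounded_form_def
proof (intro allI impI)
  fix S assume "wedge a b S \<noteq> 0"
  then obtain T where "T \<in> Pow S" "wsign T (S - T) * a T * b (S - T) \<noteq> 0"
    unfolding wedge_def by (meson sum.not_neutral_contains_not_neutral)
  then have "T \<subseteq> S" "T \<subseteq> {..<N}" "S - T \<subseteq> {..<N}"
    using assms unfolding bounded_form_def by auto
  then show "S \<subseteq> {..<N}" by blast
qed

lemma bounded_form_basis_form: "T \<subseteq> {..<N} \<Longrightarrow> bounded_form N (basis_form T)"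
  by (auto simp: bounded_form_def basis_form_def)

lemma bounded_form_wedge_prod:
  assumes "\<forall>j. bounded_form N (f j)" "finite T"
  shows "bounded_form N (wedge_prod f T)"
  using assms(2)
  by (induct T rule: finite_linorder_min_induct)
     (auto simp: wedge_prod_insert_min bounded_form_basis_form bounded_form_wedge assms(1))

lemma form_subst_basis_form: "T \<subseteq> {..<N} \<Longrightarrow> form_subst N f (basis_form T) = wedge_prod f T"
  unfolding form_subst_def basis_form_def
  by (auto simp: if_distrib[of "\<lambda>x. x * _"] sum.delta' cong: if_cong)

lemma form_subst_lincomb:
  "finite I \<Longrightarrow> form_subst N f (\<lambda>S. \<Sum>i\<in>I. c i * g i S) = (\<lambda>S. \<Sum>i\<in>I. c i * form_subst N f (g i) S)"
  unfolding form_subst_def by (auto simp: sum_distrib_left sum_distrib_right mult_ac intro: sum.swap)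

lemma form_subst_diff: "form_subst N f (\<lambda>S. a S - b S) = (\<lambda>S. form_subst N f a S - form_subst N f b S)"
  unfolding form_subst_def by (auto simp: left_diff_distrib sum_subtractf)

lemma wedge_expand_basis:
  assumes "bounded_form N a" "bounded_form N b"
  shows "wedge a b S = (\<Sum>T\<in>Pow {..<N}. \<Sum>R\<in>Pow {..<N}. a T * b R *
            (if T \<inter> R = {} \<and> S = T \<union> R then wsign T R else 0))"
proof -
  have "wedge a b S = wedge (\<lambda>S. \<Sum>T\<in>Pow {..<N}. a T * basis_form T S)
                            (\<lambda>S. \<Sum>R\<in>Pow {..<N}. b R * basis_form R S) S"
    using basis_form_expansion[OF assms(1)] basis_form_expansion[OF assms(2)] by metis
  also have "\<dots> = (\<Sum>T\<in>Pow {..<N}. \<Sum>R\<in>Pow {..<N}. a T * b R * wedge (basis_form T) (basis_form R) S)"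
    by (simp add: wedge_bilinear)
  also have "\<dots> = (\<Sum>T\<in>Pow {..<N}. \<Sum>R\<in>Pow {..<N}. a T * b R *
            (if T \<inter> R = {} \<and> S = T \<union> R then wsign T R else 0))"
    by (intro sum.cong refl, subst wedge_basis_forms) (auto intro: finite_subset)
  finally show ?thesis .
qed

lemma form_subst_wedge:
  assumes f: "\<forall>j. one_form (f j)" and a: "bounded_form N a" and b: "bounded_form N b"
  shows "form_subst N f (wedge a b) = wedge (form_subst N f a) (form_subst N f b)"
proof
  fix S
  let ?P = "Pow {..<N}"
  have "form_subst N f (wedge a b) S = (\<Sum>U\<in>?P. \<Sum>T\<in>?P. \<Sum>R\<in>?P. a T * b R *
            ((if T \<inter> R = {} \<and> U = T \<union> R then wsign T R else 0) * wedge_prod f U S))"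
    unfolding form_subst_def wedge_expand_basis[OF a b] by (simp add: sum_distrib_right mult.assoc)
  also have "\<dots> = (\<Sum>T\<in>?P. \<Sum>R\<in>?P. \<Sum>U\<in>?P. a T * b R *
            ((if T \<inter> R = {} \<and> U = T \<union> R then wsign T R else 0) * wedge_prod f U S))"
    by (subst sum.swap) (rule sum.cong[OF refl], rule sum.swap)
  also have "\<dots> = (\<Sum>T\<in>?P. \<Sum>R\<in>?P. a T * b R *
            (if T \<inter> R = {} then wsign T R * wedge_prod f (T \<union> R) S else 0))"
  proof (intro sum.cong refl)
    fix T R assume "T \<in> ?P" "R \<in> ?P"
    then have "T \<union> R \<in> ?P" by auto
    then show "(\<Sum>U\<in>?P. a T * b R * ((if T \<inter> R = {} \<and> U = T \<union> R then wsign T R else 0) * wedge_prod f U S))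
        = a T * b R * (if T \<inter> R = {} then wsign T R * wedge_prod f (T \<union> R) S else 0)"
      by (simp add: if_distrib[of "\<lambda>x. x * _"] sum.delta' flip: sum_distrib_left cong: if_cong)
  qed
  also have "\<dots> = (\<Sum>T\<in>?P. \<Sum>R\<in>?P. a T * b R * wedge (wedge_prod f T) (wedge_prod f R) S)"
    by (intro sum.cong refl, subst wedge_wedge_prods[OF f]) (auto intro: finite_subset)
  also have "\<dots> = wedge (form_subst N f a) (form_subst N f b) S"
    unfolding form_subst_def by (simp add: wedge_bilinear)
  finally show "form_subst N f (wedge a b) S = wedge (form_subst N f a) (form_subst N f b) S" .
qed

lemma form_subst_wedge_prod:
  assumes "\<forall>j. bounded_form N (f j)" "\<forall>j. one_form (g j)" "finite T"
  shows "form_subst N g (wedge_prod f T) = wedge_prod (\<lambda>j. form_subst N g (f j)) T"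
  using assms(3)
proof (induct T rule: finite_linorder_min_induct)
  case empty
  then show ?case by (simp add: form_subst_basis_form)
next
  case (insert m T)
  then show ?case
    using assms(1,2)
    by (simp add: wedge_prod_insert_min form_subst_wedge bounded_form_wedge_prod)
qed

lemma form_subst_inverse:
  assumes f: "\<forall>j. bounded_form N (f j)" and g: "\<forall>j. one_form (g j)"
    and inv: "\<forall>j<N. form_subst N g (f j) = basis_form {j}" and a: "bounded_form N a"
  shows "form_subst N g (form_subst N f a) = a"
proof -
  have "form_subst N g (wedge_prod f T) = basis_form T" if "T \<in> Pow {..<N}" for T
  proof -
    have T: "finite T" "T \<subseteq> {..<N}" using that finite_subset by auto
    have "form_subst N g (wedge_prod f T) = wedge_prod (\<lambda>j. form_subst N g (f j)) T"
      by (rule form_subst_wedge_prod[OF f g T(1)])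
    also have "\<dots> = wedge_prod (\<lambda>j. basis_form {j}) T"
      using T inv by (intro wedge_prod_cong) auto
    finally show ?thesis using wedge_prod_basis_forms[OF T(1)] by simp
  qed
  then have "form_subst N g (form_subst N f a) = (\<lambda>S. \<Sum>T\<in>Pow {..<N}. a T * basis_form T S)"
    unfolding form_subst_def[of N f] by (simp add: form_subst_lincomb)
  then show ?thesis using basis_form_expansion[OF a] by simp
qed

lemma Vpq_bounded_form: "a \<in> Vpq n p q \<Longrightarrow> bounded_form (2 * n) a"
  by (auto simp: Vpq_def bounded_form_def)

lemma Vpq_zero [simp]: "(\<lambda>S. 0) \<in> Vpq n p q"
  by (simp add: Vpq_def)

lemma Vpq_add:
  assumes "a \<in> Vpq n p q" "b \<in> Vpq n p q"
  shows "(\<lambda>S. a S + b S) \<in> Vpq n p q"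
  unfolding Vpq_def
proof (intro CollectI allI impI)
  fix S assume "a S + b S \<noteq> 0"
  then show "S \<subseteq> {..<2 * n} \<and> card (S \<inter> {..<n}) = p \<and> card (S \<inter> {n..<2 * n}) = q"
    using assms unfolding Vpq_def by (cases "a S = 0") auto
qed

lemma Vpq_diff:
  assumes "a \<in> Vpq n p q" "b \<in> Vpq n p q"
  shows "(\<lambda>S. a S - b S) \<in> Vpq n p q"
  unfolding Vpq_def
proof (intro CollectI allI impI)
  fix S assume "a S - b S \<noteq> 0"
  then show "S \<subseteq> {..<2 * n} \<and> card (S \<inter> {..<n}) = p \<and> card (S \<inter> {n..<2 * n}) = q"
    using assms unfolding Vpq_def by (cases "a S = 0") auto
qed

lemma Vpq_scale: "a \<in> Vpq n p q \<Longrightarrow> (\<lambda>S. c * a S) \<in> Vpq n p q"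
  unfolding Vpq_def by auto

lemma Vpq_sum: "finite I \<Longrightarrow> (\<And>i. i \<in> I \<Longrightarrow> g i \<in> Vpq n p q) \<Longrightarrow> (\<lambda>S. \<Sum>i\<in>I. g i S) \<in> Vpq n p q"
proof (induct I rule: finite_induct)
  case (insert x F)
  then show ?case using Vpq_add[of "g x" n p q "\<lambda>S. \<Sum>i\<in>F. g i S"] by simp
qed simp

lemma basis_form_in_Vpq:
  "S \<subseteq> {..<2 * n} \<Longrightarrow> card (S \<inter> {..<n}) = p \<Longrightarrow> card (S \<inter> {n..<2 * n}) = q \<Longrightarrow> basis_form S \<in> Vpq n p q"
  by (auto simp: Vpq_def basis_form_def)

lemma wedge_in_Vpq:
  assumes a: "a \<in> Vpq n p q" and b: "b \<in> Vpq n p' q'"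
  shows "wedge a b \<in> Vpq n (p + p') (q + q')"
  unfolding Vpq_def
proof (intro CollectI allI impI)
  fix S assume "wedge a b S \<noteq> 0"
  then obtain T where T: "T \<subseteq> S" "wsign T (S - T) * a T * b (S - T) \<noteq> 0"
    unfolding wedge_def by (meson PowD sum.not_neutral_contains_not_neutral)
  then have A: "T \<subseteq> {..<2*n}" "card (T \<inter> {..<n}) = p" "card (T \<inter> {n..<2*n}) = q"
    and B: "S - T \<subseteq> {..<2*n}" "card ((S - T) \<inter> {..<n}) = p'" "card ((S - T) \<inter> {n..<2*n}) = q'"
    using a b unfolding Vpq_def by auto
  have fin: "finite T" "finite (S - T)" using A(1) B(1) finite_subset by auto
  have "card (S \<inter> I) = card (T \<inter> I) + card ((S - T) \<inter> I)" for I
  proof -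
    have "S \<inter> I = T \<inter> I \<union> (S - T) \<inter> I" using T(1) by blast
    moreover have "T \<inter> I \<inter> ((S - T) \<inter> I) = {}" by blast
    ultimately show ?thesis using fin by (simp add: card_Un_disjoint)
  qed
  then show "S \<subseteq> {..<2*n} \<and> card (S \<inter> {..<n}) = p + p' \<and> card (S \<inter> {n..<2*n}) = q + q'"
    using A B T(1) by auto
qed

lemma wedge_prod_in_Vpq:
  assumes f1: "\<forall>j<n. f j \<in> Vpq n 1 0" and f2: "\<forall>j. n \<le> j \<and> j < 2 * n \<longrightarrow> f j \<in> Vpq n 0 1"
    and T: "T \<subseteq> {..<2 * n}"
  shows "wedge_prod f T \<in> Vpq n (card (T \<inter> {..<n})) (card (T \<inter> {n..<2 * n}))"
proof -
  have "finite T" using T finite_subset by auto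
  then show ?thesis using T
  proof (induct T rule: finite_linorder_min_induct)
    case empty
    then show ?case by (simp add: basis_form_in_Vpq)
  next
    case (insert m T)
    have IH: "wedge_prod f T \<in> Vpq n (card (T \<inter> {..<n})) (card (T \<inter> {n..<2 * n}))"
      using insert by auto
    have m: "m \<notin> T" "m < 2 * n" using insert by auto
    have fin: "finite (T \<inter> {..<n})" "finite (T \<inter> {n..<2 * n})" using insert.hyps by auto
    show ?case
    proof (cases "m < n")
      case True
      then show ?thesis
        using wedge_in_Vpq[OF _ IH, of "f m" 1 0] f1 fin m insert.hyps
        by (simp add: wedge_prod_insert_min)
    next
      case False
      then show ?thesis
        using wedge_in_Vpq[OF _ IH, of "f m" 0 1] f2 fin m insert.hyps
        by (simp add: wedge_prod_insert_min)
    qed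
  qed
qed

lemma form_subst_in_Vpq:
  assumes "\<forall>j<n. f j \<in> Vpq n 1 0" "\<forall>j. n \<le> j \<and> j < 2 * n \<longrightarrow> f j \<in> Vpq n 0 1"
    and a: "a \<in> Vpq n p q"
  shows "form_subst (2 * n) f a \<in> Vpq n p q"
  unfolding form_subst_def
proof (intro Vpq_sum)
  fix T assume "T \<in> Pow {..<2 * n}"
  then show "(\<lambda>S. a T * wedge_prod f T S) \<in> Vpq n p q"
    using wedge_prod_in_Vpq[OF assms(1,2), of T] a by (cases "a T = 0") (auto simp: Vpq_def)
qed simp

section \<open>Linear changes of coordinates\<close>

definition mat_mult :: "nat \<Rightarrow> (nat \<Rightarrow> nat \<Rightarrow> complex) \<Rightarrow> (nat \<Rightarrow> nat \<Rightarrow> complex) \<Rightarrow> nat \<Rightarrow> nat \<Rightarrow> complex" where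
  "mat_mult n A B i k = (\<Sum>l<n. A i l * B l k)"

definition mat_inverse :: "nat \<Rightarrow> (nat \<Rightarrow> nat \<Rightarrow> complex) \<Rightarrow> (nat \<Rightarrow> nat \<Rightarrow> complex) \<Rightarrow> bool" where
  "mat_inverse n A B \<longleftrightarrow> (\<forall>i<n. \<forall>k<n. mat_mult n A B i k = (if i = k then 1 else 0))"

lemma invertible_mat_iff_inverse: "invertible_mat n A \<longleftrightarrow> (\<exists>B. mat_inverse n A B)"
  unfolding Defs.invertible_mat_def mat_inverse_def mat_mult_def ..

lemma mat_inverse_commute:
  assumes "mat_inverse n A B"
  shows "mat_inverse n B A"
proof -
  let ?M = "\<lambda>X :: nat \<Rightarrow> nat \<Rightarrow> complex. mat n n (\<lambda>(i, j). X i j)"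
  have entry: "(?M X * ?M Y) $$ (i, k) = mat_mult n X Y i k" if "i < n" "k < n" for X Y i k
    using that by (simp add: scalar_prod_def row_def col_def mat_mult_def) (rule sum.cong, auto)
  have "?M A * ?M B = 1\<^sub>m n"
  proof (rule eq_matI)
    fix i k assume "i < dim_row (1\<^sub>m n)" "k < dim_col (1\<^sub>m n)"
    then have ik: "i < n" "k < n" by simp_all
    have "(?M A * ?M B) $$ (i, k) = mat_mult n A B i k" by (rule entry[OF ik])
    also have "\<dots> = 1\<^sub>m n $$ (i, k)" using assms ik by (simp add: mat_inverse_def)
    finally show "(?M A * ?M B) $$ (i, k) = 1\<^sub>m n $$ (i, k)" .
  qed simp_all
  then have BA: "?M B * ?M A = 1\<^sub>m n"
    by (intro mat_mult_left_right_inverse[of "?M A" n]) auto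
  show ?thesis
    unfolding mat_inverse_def
  proof (intro allI impI)
    fix i k assume ik: "i < n" "k < n"
    have "mat_mult n B A i k = (?M B * ?M A) $$ (i, k)" using entry[OF ik] by simp
    then show "mat_mult n B A i k = (if i = k then 1 else 0)" using ik by (simp add: BA)
  qed
qed

lemma mat_mult_assoc: "mat_mult n (mat_mult n X Y) Z = mat_mult n X (mat_mult n Y Z)"
proof (intro ext)
  fix i k
  have "mat_mult n (mat_mult n X Y) Z i k = (\<Sum>l<n. \<Sum>m<n. X i m * (Y m l * Z l k))"
    unfolding mat_mult_def by (simp add: sum_distrib_right mult.assoc)
  also have "\<dots> = (\<Sum>m<n. \<Sum>l<n. X i m * (Y m l * Z l k))" by (rule sum.swap)
  finally show "mat_mult n (mat_mult n X Y) Z i k = mat_mult n X (mat_mult n Y Z) i k"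
    unfolding mat_mult_def by (simp add: sum_distrib_left)
qed

lemma mat_mult_identity_left:
  assumes "mat_inverse n X Y" "i < n"
  shows "mat_mult n (mat_mult n X Y) Z i k = Z i k"
proof -
  have "mat_mult n (mat_mult n X Y) Z i k = (\<Sum>l<n. if l = i then Z l k else 0)"
    using assms unfolding mat_mult_def[of n "mat_mult n X Y"] mat_inverse_def by (intro sum.cong) auto
  then show ?thesis using assms(2) by simp
qed

lemma mat_inverse_mult:
  assumes "mat_inverse n A B" "mat_inverse n C D"
  shows "mat_inverse n (mat_mult n A C) (mat_mult n D B)"
  unfolding mat_inverse_def
proof (intro allI impI)
  fix i k assume ik: "i < n" "k < n"
  have "mat_mult n (mat_mult n A C) (mat_mult n D B) i k = mat_mult n A (mat_mult n (mat_mult n C D) B) i k"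
    by (simp add: mat_mult_assoc)
  also have "\<dots> = mat_mult n A B i k"
    unfolding mat_mult_def[of n A] by (intro sum.cong refl) (simp add: mat_mult_identity_left[OF assms(2)])
  finally show "mat_mult n (mat_mult n A C) (mat_mult n D B) i k = (if i = k then 1 else 0)"
    using assms(1) ik by (simp add: mat_inverse_def)
qed

lemma mat_inverse_column_nonzero:
  assumes "mat_inverse n R K" "l < n"
  obtains m where "m < n" "K m l \<noteq> 0"
proof -
  have "(\<Sum>m<n. R l m * K m l) = 1"
    using assms by (simp add: mat_inverse_def mat_mult_def)
  then have "\<not> (\<forall>m\<in>{..<n}. R l m * K m l = 0)"
    using sum.neutral[of "{..<n}" "\<lambda>m. R l m * K m l"] by auto
  then obtain m where "m < n" "R l m * K m l \<noteq> 0" by auto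
  then show ?thesis using that by simp
qed

text \<open>\<open>coframe n A\<close> lists \<open>dw\<^sub>0, \<dots>, dw\<^sub>n\<^sub>-\<^sub>1, dw\<^sub>0 bar, \<dots>\<close> for the coordinates \<open>w\<^sub>l = \<Sum>\<^sub>j A l j z\<^sub>j\<close>,
  indexed like the generators \<open>dz\<^sub>j\<close> (index \<open>j\<close>) and \<open>dz\<^sub>j bar\<close> (index \<open>n + j\<close>).\<close>

definition coframe :: "nat \<Rightarrow> (nat \<Rightarrow> nat \<Rightarrow> complex) \<Rightarrow> nat \<Rightarrow> form" where
  "coframe n A j =
     (if j < n then dZ n (A j) else if j < 2 * n then dZbar n (\<lambda>k. cnj (A (j - n) k)) else (\<lambda>S. 0))"

lemma dZ_expand: "dZ n c = (\<lambda>S. \<Sum>k<n. c k * basis_form {k} S)"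
  unfolding dZ_def basis_form_def by (intro ext sum.cong) auto

lemma dZbar_expand: "dZbar n c = (\<lambda>S. \<Sum>k<n. c k * basis_form {n + k} S)"
  unfolding dZbar_def basis_form_def by (intro ext sum.cong) auto

lemma one_form_dZ: "one_form (dZ n c)"
  unfolding one_form_def dZ_def
proof (intro allI impI)
  fix S assume "(\<Sum>j<n. if S = {j} then c j else 0) \<noteq> 0"
  then obtain j where "j \<in> {..<n}" "(if S = {j} then c j else 0) \<noteq> 0"
    by (rule sum.not_neutral_contains_not_neutral)
  then show "card S = 1" by (cases "S = {j}") auto
qed

lemma one_form_dZbar: "one_form (dZbar n c)"
  unfolding one_form_def dZbar_def
proof (intro allI impI)
  fix S assume "(\<Sum>j<n. if S = {n + j} then c j else 0) \<noteq> 0"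
  then obtain j where "j \<in> {..<n}" "(if S = {n + j} then c j else 0) \<noteq> 0"
    by (rule sum.not_neutral_contains_not_neutral)
  then show "card S = 1" by (cases "S = {n + j}") auto
qed

lemma one_form_coframe: "one_form (coframe n A j)"
  unfolding coframe_def using one_form_dZ one_form_dZbar by (simp add: one_form_def[of "\<lambda>S. 0"])

lemma dZ_in_V10: "dZ n c \<in> Vpq n 1 0"
  unfolding dZ_expand by (intro Vpq_sum Vpq_scale basis_form_in_Vpq) auto

lemma dZbar_in_V01: "dZbar n c \<in> Vpq n 0 1"
proof -
  have "{n + k} \<inter> {..<n} = {}" "{n + k} \<inter> {n..<2 * n} = {n + k}" if "k < n" for k
    using that by auto
  then show ?thesis
    unfolding dZbar_expand by (intro Vpq_sum Vpq_scale basis_form_in_Vpq) auto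
qed

lemma coframe_in_V10: "\<forall>j<n. coframe n A j \<in> Vpq n 1 0"
  using dZ_in_V10 by (simp add: coframe_def del: One_nat_def)

lemma coframe_in_V01: "\<forall>j. n \<le> j \<and> j < 2 * n \<longrightarrow> coframe n A j \<in> Vpq n 0 1"
  using dZbar_in_V01 by (simp add: coframe_def del: One_nat_def)

lemma bounded_form_coframe: "bounded_form (2 * n) (coframe n A j)"
proof (cases "j < 2 * n")
  case True
  then have "coframe n A j \<in> Vpq n 1 0 \<or> coframe n A j \<in> Vpq n 0 1"
    using coframe_in_V10 coframe_in_V01 by (cases "j < n") auto
  then show ?thesis using Vpq_bounded_form by blast
next
  case False
  then show ?thesis by (simp add: coframe_def bounded_form_def)
qed

lemma form_subst_coframe_in_Vpq: "a \<in> Vpq n p q \<Longrightarrow> form_subst (2 * n) (coframe n A) a \<in> Vpq n p q"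
  by (rule form_subst_in_Vpq[OF coframe_in_V10 coframe_in_V01])

lemma form_subst_coframe_basis:
  "j < 2 * n \<Longrightarrow> form_subst (2 * n) (coframe n B) (basis_form {j}) = coframe n B j"
  by (simp add: form_subst_basis_form wedge_prod_singleton one_form_coframe)

lemma form_subst_coframe:
  assumes j: "j < 2 * n"
  shows "form_subst (2 * n) (coframe n B) (coframe n A j) = coframe n (mat_mult n A B) j"
proof (cases "j < n")
  case True
  have "form_subst (2 * n) (coframe n B) (coframe n A j)
      = (\<lambda>S. \<Sum>k<n. A j k * (\<Sum>m<n. B k m * basis_form {m} S))"
    using True by (simp add: coframe_def dZ_expand form_subst_lincomb form_subst_coframe_basis)
  also have "\<dots> = (\<lambda>S. \<Sum>m<n. mat_mult n A B j m * basis_form {m} S)"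
    unfolding mat_mult_def
    by (intro ext) (simp only: sum_distrib_left sum_distrib_right mult.assoc, rule sum.swap)
  finally show ?thesis using True by (simp add: coframe_def dZ_expand)
next
  case False
  have "form_subst (2 * n) (coframe n B) (coframe n A j)
      = (\<lambda>S. \<Sum>k<n. cnj (A (j - n) k) * (\<Sum>m<n. cnj (B k m) * basis_form {n + m} S))"
    using False j by (simp add: coframe_def dZbar_expand form_subst_lincomb form_subst_coframe_basis)
  also have "\<dots> = (\<lambda>S. \<Sum>m<n. (\<Sum>k<n. cnj (A (j - n) k) * cnj (B k m)) * basis_form {n + m} S)"
    by (intro ext) (simp only: sum_distrib_left sum_distrib_right mult.assoc, rule sum.swap)
  also have "\<dots> = (\<lambda>S. \<Sum>m<n. cnj (mat_mult n A B (j - n) m) * basis_form {n + m} S)"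
    by (simp add: mat_mult_def)
  finally show ?thesis using False j by (simp add: coframe_def dZbar_expand)
qed

lemma coframe_identity:
  assumes AB: "mat_inverse n A B" and j: "j < 2 * n"
  shows "coframe n (mat_mult n A B) j = basis_form {j}"
proof (cases "j < n")
  case True
  then have "coframe n (mat_mult n A B) j = (\<lambda>S. \<Sum>k<n. if k = j then basis_form {k} S else 0)"
    using AB by (simp add: coframe_def dZ_expand mat_inverse_def if_distrib[of "\<lambda>x. x * _"] cong: if_cong)
  then show ?thesis using True by simp
next
  case False
  have "cnj (mat_mult n A B (j - n) k) = (if k = j - n then 1 else 0)" if "k < n" for k
    using AB j False that by (simp add: mat_inverse_def)
  then have "coframe n (mat_mult n A B) j = (\<lambda>S. \<Sum>k<n. (if k = j - n then 1 else 0) * basis_form {n + k} S)"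
    using False j unfolding coframe_def dZbar_expand by (intro ext sum.cong refl) auto
  also have "\<dots> = basis_form {n + (j - n)}"
    using False j by (intro ext) (simp add: if_distrib[of "\<lambda>x. x * _"] cong: if_cong)
  finally show ?thesis using False by simp
qed

lemma form_subst_coframe_inverse:
  assumes "mat_inverse n A B" "bounded_form (2 * n) a"
  shows "form_subst (2 * n) (coframe n B) (form_subst (2 * n) (coframe n A) a) = a"
  by (rule form_subst_inverse[OF _ _ _ assms(2)])
     (simp_all add: bounded_form_coframe one_form_coframe form_subst_coframe coframe_identity[OF assms(1)])

lemma form_subst_coframe_bij:
  assumes "mat_inverse n A B"
  shows "bij_betw (form_subst (2 * n) (coframe n A)) (Vpq n p q) (Vpq n p q)"
proof (rule bij_betw_byWitness[where f' = "form_subst (2 * n) (coframe n B)"])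
  show "\<forall>a\<in>Vpq n p q. form_subst (2 * n) (coframe n B) (form_subst (2 * n) (coframe n A) a) = a"
    using form_subst_coframe_inverse[OF assms] Vpq_bounded_form by blast
  show "\<forall>a\<in>Vpq n p q. form_subst (2 * n) (coframe n A) (form_subst (2 * n) (coframe n B) a) = a"
    using form_subst_coframe_inverse[OF mat_inverse_commute[OF assms]] Vpq_bounded_form by blast
qed (auto intro: form_subst_coframe_in_Vpq)

text \<open>Linear changes of coordinates act by algebra automorphisms preserving the bidegree.\<close>

lemma lefschetz_coordinate_change:
  assumes A: "invertible_mat n A" and L: "lefschetz n k \<Omega> p q"
  shows "lefschetz n k (form_subst (2 * n) (coframe n A) \<Omega>) p q"
proof -
  obtain B where AB: "mat_inverse n A B" using A by (auto simp: invertible_mat_iff_inverse)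
  note BA = mat_inverse_commute[OF AB]
  let ?\<phi> = "form_subst (2 * n) (coframe n A)" and ?\<psi> = "form_subst (2 * n) (coframe n B)"
  have \<Omega>: "\<Omega> \<in> Vpq n k k" and bij: "bij_betw (\<lambda>\<alpha>. wedge \<alpha> \<Omega>) (Vpq n p q) (Vpq n (n - q) (n - p))"
    using L by (auto simp: lefschetz_def)
  have conj: "wedge \<alpha> (?\<phi> \<Omega>) = (?\<phi> \<circ> (\<lambda>\<alpha>. wedge \<alpha> \<Omega>) \<circ> ?\<psi>) \<alpha>" if "\<alpha> \<in> Vpq n p q" for \<alpha>
  proof -
    have "?\<psi> \<alpha> \<in> Vpq n p q" using that by (rule form_subst_coframe_in_Vpq)
    then have "?\<phi> (wedge (?\<psi> \<alpha>) \<Omega>) = wedge (?\<phi> (?\<psi> \<alpha>)) (?\<phi> \<Omega>)"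
      using \<Omega> by (intro form_subst_wedge) (auto simp: one_form_coframe Vpq_bounded_form)
    then show ?thesis
      using form_subst_coframe_inverse[OF BA Vpq_bounded_form[OF that]] by simp
  qed
  have "bij_betw (?\<phi> \<circ> (\<lambda>\<alpha>. wedge \<alpha> \<Omega>) \<circ> ?\<psi>) (Vpq n p q) (Vpq n (n - q) (n - p))"
    by (rule bij_betw_trans[OF form_subst_coframe_bij[OF BA] bij_betw_trans[OF bij form_subst_coframe_bij[OF AB]]])
  then have "bij_betw (\<lambda>\<alpha>. wedge \<alpha> (?\<phi> \<Omega>)) (Vpq n p q) (Vpq n (n - q) (n - p))"
    by (rule bij_betw_cong[THEN iffD1, rotated]) (simp add: conj)
  then show ?thesis
    using L \<Omega> by (simp add: lefschetz_def form_subst_coframe_in_Vpq)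
qed

definition std_diag_form :: "nat \<Rightarrow> (nat \<Rightarrow> complex) \<Rightarrow> form" where
  "std_diag_form n b = (\<lambda>S. \<Sum>l<n. (b l * (\<i> / 2)) * wedge (basis_form {l}) (basis_form {n + l}) S)"

lemma std_diag_form_in_V11: "std_diag_form n b \<in> Vpq n 1 1"
proof -
  have "wedge (basis_form {l}) (basis_form {n + l}) \<in> Vpq n (1 + 0) (0 + 1)" if "l < n" for l
    using that by (intro wedge_in_Vpq basis_form_in_Vpq) auto
  then show ?thesis
    unfolding std_diag_form_def by (intro Vpq_sum Vpq_scale) auto
qed

lemma diag_form_coframe:
  "diag_form n K b = (\<lambda>S. \<Sum>l<n. (b l * (\<i> / 2)) * wedge (coframe n K l) (coframe n K (n + l)) S)"
  unfolding diag_form_def by (intro ext sum.cong refl) (simp add: coframe_def)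

lemma diag_form_eq_form_subst: "diag_form n A b = form_subst (2 * n) (coframe n A) (std_diag_form n b)"
proof -
  have "form_subst (2 * n) (coframe n A) (wedge (basis_form {l}) (basis_form {n + l}))
      = wedge (coframe n A l) (coframe n A (n + l))" if "l < n" for l
    using that
    by (simp add: form_subst_wedge one_form_coframe bounded_form_basis_form form_subst_coframe_basis)
  then show ?thesis
    unfolding std_diag_form_def diag_form_coframe form_subst_lincomb[OF finite_lessThan]
    by (intro ext sum.cong refl) simp
qed

lemma form_subst_diag_form:
  "form_subst (2 * n) (coframe n B) (diag_form n K b) = diag_form n (mat_mult n K B) b"
proof -
  have "form_subst (2 * n) (coframe n B) (wedge (coframe n K l) (coframe n K (n + l)))
      = wedge (coframe n (mat_mult n K B) l) (coframe n (mat_mult n K B) (n + l))" if "l < n" for l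
    using that
    by (simp add: form_subst_wedge one_form_coframe bounded_form_coframe form_subst_coframe)
  then show ?thesis
    unfolding diag_form_coframe form_subst_lincomb[OF finite_lessThan]
    by (intro ext sum.cong refl) simp
qed

lemma wsign_holo_antiholo:
  assumes "l < n"
  shows "wsign {l} {n + m} = 1"
proof -
  have "inversions {l} {n + m} = {}" using assms by (auto simp: inversions_def)
  then show ?thesis by (simp add: wsign_eq_inversions)
qed

lemma diag_form_at:
  assumes l: "l < n"
  shows "diag_form n K b {l, n + l} = (\<i> / 2) * (\<Sum>m<n. b m * (K m l * cnj (K m l)))"
proof -
  have "wedge (dZ n c) (dZbar n d) {l, n + l} = c l * d l" for c d
    using wedge_one_forms_doubleton[OF one_form_dZ one_form_dZbar, of l "n + l" n c n d] l
    by (simp add: wsign_holo_antiholo dZ_def dZbar_def)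
  then show ?thesis unfolding diag_form_def by (simp add: sum_distrib_left mult_ac)
qed

lemma std_diag_form_at:
  assumes l: "l < n"
  shows "std_diag_form n b {l, n + l} = b l * (\<i> / 2)"
proof -
  have "wedge (basis_form {m}) (basis_form {n + m}) {l, n + l} = (if m = l then 1 else 0)" if "m < n" for m
    using that l by (auto simp: wedge_basis_forms wsign_holo_antiholo doubleton_eq_iff)
  then have "std_diag_form n b {l, n + l} = (\<Sum>m<n. if m = l then b l * (\<i> / 2) else 0)"
    unfolding std_diag_form_def by (intro sum.cong refl) simp
  then show ?thesis using l by simp
qed

lemma kahler_diag_form_coeff_pos:
  assumes AB: "mat_inverse n A B" and kah: "kahler n (diag_form n A c)" and l: "l < n"
  shows "\<exists>t>0. c l = complex_of_real t"
proof -
  obtain A' where A': "invertible_mat n A'" and eq: "diag_form n A c = diag_form n A' (\<lambda>_. 1)"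
    using kah unfolding kahler_def by blast
  obtain B' where A'B': "mat_inverse n A' B'" using A' by (auto simp: invertible_mat_iff_inverse)
  define K where "K = mat_mult n A' B"
  have "std_diag_form n c = form_subst (2 * n) (coframe n B) (diag_form n A c)"
    using form_subst_coframe_inverse[OF AB Vpq_bounded_form[OF std_diag_form_in_V11]]
    by (simp add: diag_form_eq_form_subst)
  also have "\<dots> = diag_form n K (\<lambda>_. 1)"
    by (simp add: eq K_def form_subst_diag_form)
  finally have "std_diag_form n c {l, n + l} = diag_form n K (\<lambda>_. 1) {l, n + l}" by simp
  then have "c l = (\<Sum>m<n. K m l * cnj (K m l))"
    using l by (simp add: std_diag_form_at diag_form_at)
  also have "\<dots> = complex_of_real (\<Sum>m<n. (cmod (K m l))\<^sup>2)"
    unfolding of_real_sum by (intro sum.cong refl) (simp only: complex_norm_square)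
  finally have c: "c l = complex_of_real (\<Sum>m<n. (cmod (K m l))\<^sup>2)" .
  have "mat_inverse n (mat_mult n A B') K"
    unfolding K_def by (rule mat_inverse_mult[OF AB mat_inverse_commute[OF A'B']])
  then obtain m where m: "m < n" "K m l \<noteq> 0" using l by (rule mat_inverse_column_nonzero)
  have "0 < (cmod (K m l))\<^sup>2" using m by simp
  also have "\<dots> \<le> (\<Sum>m<n. (cmod (K m l))\<^sup>2)" by (rule member_le_sum) (use m in auto)
  finally show ?thesis using c by blast
qed

section \<open>Positive Hermitian \<open>2 \<times> 2\<close> matrices and the Minkowski form\<close>

definition pos_hermitian2 :: "(nat \<Rightarrow> nat \<Rightarrow> complex) \<Rightarrow> bool" where
  "pos_hermitian2 H \<longleftrightarrow> (\<forall>\<theta>. (\<exists>i<2. \<theta> i \<noteq> 0) \<longrightarrow>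
      (\<exists>t>0. (\<Sum>i<2. \<Sum>j<2. \<theta> i * H i j * cnj (\<theta> j)) = complex_of_real t))"

lemma sum_lessThan_2: "(\<Sum>j<2::nat. f j) = f 0 + f 1"
  by (simp add: numeral_2_eq_2)

lemma pos_hermitian2D:
  assumes "pos_hermitian2 H"
  shows "Im (H 0 0) = 0" "Im (H 1 1) = 0" "H 1 0 = cnj (H 0 1)"
    and "Re (H 0 0) * Re (H 1 1) - (Re (H 0 1))\<^sup>2 - (Im (H 0 1))\<^sup>2 > 0"
proof -
  have pos: "\<exists>t>0. u * H 0 0 * cnj u + u * H 0 1 * cnj v + v * H 1 0 * cnj u + v * H 1 1 * cnj v
      = complex_of_real t" if "u \<noteq> 0 \<or> v \<noteq> 0" for u v
  proof -
    have "\<exists>i<2::nat. (\<lambda>i. if i = 0 then u else v) i \<noteq> 0"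
    proof (cases "u = 0")
      case True
      then show ?thesis using that by (intro exI[of _ 1]) simp
    next
      case False
      then show ?thesis by (intro exI[of _ 0]) simp
    qed
    from assms[unfolded pos_hermitian2_def, rule_format, OF this]
    show ?thesis by (simp add: sum_lessThan_2 add.assoc)
  qed
  obtain p where p: "p > 0" "H 0 0 = complex_of_real p" using pos[of 1 0] by auto
  obtain r where r: "r > 0" "H 1 1 = complex_of_real r" using pos[of 0 1] by auto
  obtain t3 where t3: "H 0 0 + H 0 1 + H 1 0 + H 1 1 = complex_of_real t3" using pos[of 1 1] by auto
  have im: "Im (H 0 1) + Im (H 1 0) = 0" using arg_cong[OF t3, of Im] p r by simp
  obtain t4 where t4: "H 0 0 + H 0 1 * cnj \<i> + \<i> * H 1 0 + \<i> * H 1 1 * cnj \<i> = complex_of_real t4"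
    using pos[of 1 \<i>] by auto
  have re: "Re (H 1 0) - Re (H 0 1) = 0" using arg_cong[OF t4, of Im] p r by simp
  define x y where "x = Re (H 0 1)" and "y = Im (H 0 1)"
  have H01: "H 0 1 = Complex x y" and H10: "H 1 0 = Complex x (- y)"
    using im re by (simp_all add: x_def y_def complex_eq_iff)
  obtain t where t: "t > 0"
    "H 1 1 * H 0 0 * cnj (H 1 1) + H 1 1 * H 0 1 * cnj (- H 0 1) + (- H 0 1) * H 1 0 * cnj (H 1 1)
       + (- H 0 1) * H 1 1 * cnj (- H 0 1) = complex_of_real t"
    using pos[of "H 1 1" "- H 0 1"] r by auto
  have "t = r * (p * r - x\<^sup>2 - y\<^sup>2)"
    using arg_cong[OF t(2), of Re] unfolding p(2) r(2) H01 H10 by (simp add: power2_eq_square algebra_simps)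
  then have "p * r - x\<^sup>2 - y\<^sup>2 > 0" using t(1) r(1) by (simp add: zero_less_mult_iff)
  then show "Im (H 0 0) = 0" "Im (H 1 1) = 0" "H 1 0 = cnj (H 0 1)"
    and "Re (H 0 0) * Re (H 1 1) - (Re (H 0 1))\<^sup>2 - (Im (H 0 1))\<^sup>2 > 0"
    using p r H01 H10 by (simp_all add: complex_eq_iff)
qed

text \<open>The polarization of the Lorentzian quadratic form \<open>p r - x\<^sup>2 - y\<^sup>2\<close>, which is the determinant of the
  Hermitian matrix with diagonal \<open>p, r\<close> and off-diagonal entry \<open>x + i y\<close>. Positive Hermitian
  matrices are the timelike vectors of one light cone.\<close>

definition minkowski :: "real \<Rightarrow> real \<Rightarrow> real \<Rightarrow> real \<Rightarrow> real \<Rightarrow> real \<Rightarrow> real \<Rightarrow> real \<Rightarrow> real" where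
  "minkowski p r x y p' r' x' y' = (p * r' + p' * r) / 2 - x * x' - y * y'"

lemma minkowski_sym: "minkowski p r x y p' r' x' y' = minkowski p' r' x' y' p r x y"
  unfolding minkowski_def by (simp add: algebra_simps)

lemma minkowski_self: "minkowski p r x y p r x y = p * r - x\<^sup>2 - y\<^sup>2"
  unfolding minkowski_def by (simp add: power2_eq_square field_simps)

lemma minkowski_sum_right:
  fixes z P R X Y :: "nat \<Rightarrow> real"
  assumes "finite J"
  shows "minkowski p r x y (\<Sum>j\<in>J. z j * P j) (\<Sum>j\<in>J. z j * R j) (\<Sum>j\<in>J. z j * X j) (\<Sum>j\<in>J. z j * Y j)
       = (\<Sum>j\<in>J. z j * minkowski p r x y (P j) (R j) (X j) (Y j))"
  using assms by (induct J rule: finite_induct) (simp_all add: minkowski_def algebra_simps add_divide_distrib)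

lemma minkowski_orthogonal_not_timelike:
  fixes p r x y P R X Y :: real
  assumes timelike: "p * r - x\<^sup>2 - y\<^sup>2 > 0" and orth: "minkowski p r x y P R X Y = 0"
  shows "P * R - X\<^sup>2 - Y\<^sup>2 \<le> 0"
proof (rule ccontr)
  assume "\<not> P * R - X\<^sup>2 - Y\<^sup>2 \<le> 0"
  then have W: "P * R > X\<^sup>2 + Y\<^sup>2" by simp
  have sq: "x\<^sup>2 + y\<^sup>2 \<ge> 0" "X\<^sup>2 + Y\<^sup>2 \<ge> 0" by simp_all
  have e: "p * R + P * r = 2 * (x * X + y * Y)" using orth by (simp add: minkowski_def field_simps)
  have am_gm: "4 * (p * r) * (P * R) \<le> (p * R + P * r)\<^sup>2"
  proof -
    have "(p * R + P * r)\<^sup>2 - 4 * (p * r) * (P * R) = (p * R - P * r)\<^sup>2"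
      by (simp add: power2_eq_square algebra_simps)
    then show ?thesis by (metis diff_ge_0_iff_ge zero_le_power2)
  qed
  have cauchy_schwarz: "(x * X + y * Y)\<^sup>2 \<le> (x\<^sup>2 + y\<^sup>2) * (X\<^sup>2 + Y\<^sup>2)"
  proof -
    have "(x\<^sup>2 + y\<^sup>2) * (X\<^sup>2 + Y\<^sup>2) - (x * X + y * Y)\<^sup>2 = (x * Y - y * X)\<^sup>2"
      by (simp add: power2_eq_square algebra_simps)
    then show ?thesis by (metis diff_ge_0_iff_ge zero_le_power2)
  qed
  have "4 * (p * r) * (P * R) \<le> 4 * (x * X + y * Y)\<^sup>2"
    using am_gm unfolding e by (simp add: power2_eq_square algebra_simps)
  then have "(p * r) * (P * R) \<le> (x\<^sup>2 + y\<^sup>2) * (X\<^sup>2 + Y\<^sup>2)"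
    using cauchy_schwarz by simp
  moreover have "(x\<^sup>2 + y\<^sup>2) * (X\<^sup>2 + Y\<^sup>2) < (p * r) * (P * R)"
    using W sq timelike by (intro mult_strict_mono') auto
  ultimately show False by simp
qed

text \<open>Reverse Cauchy-Schwarz: project the second vector onto the Minkowski-orthogonal complement
  of the first and apply \<open>minkowski_orthogonal_not_timelike\<close>.\<close>

lemma minkowski_reverse_cauchy_schwarz:
  fixes p r x y P R X Y :: real
  assumes timelike: "p * r - x\<^sup>2 - y\<^sup>2 > 0"
  shows "(p * r - x\<^sup>2 - y\<^sup>2) * (P * R - X\<^sup>2 - Y\<^sup>2) \<le> (minkowski p r x y P R X Y)\<^sup>2"
proof -
  define a b w where "a = p * r - x\<^sup>2 - y\<^sup>2" and "b = minkowski p r x y P R X Y"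
    and "w = P * R - X\<^sup>2 - Y\<^sup>2"
  have "minkowski p r x y (a * P - b * p) (a * R - b * r) (a * X - b * x) (a * Y - b * y) = 0"
    unfolding a_def b_def minkowski_def by (simp add: power2_eq_square field_simps)
  then have "(a * P - b * p) * (a * R - b * r) - (a * X - b * x)\<^sup>2 - (a * Y - b * y)\<^sup>2 \<le> 0"
    by (rule minkowski_orthogonal_not_timelike[OF timelike])
  also have "(a * P - b * p) * (a * R - b * r) - (a * X - b * x)\<^sup>2 - (a * Y - b * y)\<^sup>2 = a * (a * w - b\<^sup>2)"
    unfolding a_def b_def w_def minkowski_def by (simp add: power2_eq_square field_simps)
  finally have "a * (a * w - b\<^sup>2) \<le> 0" .
  moreover have "a > 0" using timelike a_def by simp
  ultimately have "a * w \<le> b\<^sup>2" by (simp add: mult_le_0_iff)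
  then show ?thesis unfolding a_def b_def w_def .
qed

lemma minkowski_timelike_nonzero:
  fixes p r x y P R X Y :: real
  assumes "p * r - x\<^sup>2 - y\<^sup>2 > 0" "P * R - X\<^sup>2 - Y\<^sup>2 > 0"
  shows "minkowski p r x y P R X Y \<noteq> 0"
proof -
  have "0 < (p * r - x\<^sup>2 - y\<^sup>2) * (P * R - X\<^sup>2 - Y\<^sup>2)" using assms by simp
  also have "\<dots> \<le> (minkowski p r x y P R X Y)\<^sup>2" by (rule minkowski_reverse_cauchy_schwarz[OF assms(1)])
  finally show ?thesis by auto
qed

lemma minkowski_hollow_kernel:
  fixes P R X Y z :: "nat \<Rightarrow> real"
  assumes "finite J" "k \<in> J"
    and "(\<Sum>j\<in>J. (if j = k then 0 else minkowski (P k) (R k) (X k) (Y k) (P j) (R j) (X j) (Y j)) * z j) = 0"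
  shows "minkowski (P k) (R k) (X k) (Y k)
      (\<Sum>j\<in>J. z j * P j) (\<Sum>j\<in>J. z j * R j) (\<Sum>j\<in>J. z j * X j) (\<Sum>j\<in>J. z j * Y j)
    = z k * (P k * R k - (X k)\<^sup>2 - (Y k)\<^sup>2)"
proof -
  have "minkowski (P k) (R k) (X k) (Y k)
      (\<Sum>j\<in>J. z j * P j) (\<Sum>j\<in>J. z j * R j) (\<Sum>j\<in>J. z j * X j) (\<Sum>j\<in>J. z j * Y j)
    = (\<Sum>j\<in>J. (if j = k then z k * (P k * R k - (X k)\<^sup>2 - (Y k)\<^sup>2) else 0)
        + (if j = k then 0 else minkowski (P k) (R k) (X k) (Y k) (P j) (R j) (X j) (Y j)) * z j)"
    unfolding minkowski_sum_right[OF assms(1)] by (intro sum.cong refl) (auto simp: minkowski_self)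
  also have "\<dots> = z k * (P k * R k - (X k)\<^sup>2 - (Y k)\<^sup>2)" using assms by (simp add: sum.distrib)
  finally show ?thesis .
qed

text \<open>For a kernel vector \<open>z\<close> put \<open>w = \<Sum> z\<^sub>j v\<^sub>j\<close>: then \<open>\<langle>v\<^sub>k, w\<rangle> = z\<^sub>k \<langle>v\<^sub>k, v\<^sub>k\<rangle>\<close> and
  \<open>\<langle>w, w\<rangle> = \<Sum> z\<^sub>k\<^sup>2 \<langle>v\<^sub>k, v\<^sub>k\<rangle> \<ge> 0\<close>, while reverse Cauchy-Schwarz gives \<open>\<langle>w, w\<rangle> \<le> z\<^sub>k\<^sup>2 \<langle>v\<^sub>k, v\<^sub>k\<rangle>\<close>
  for every \<open>k\<close>; summing over at least two \<open>k\<close> forces \<open>\<langle>w, w\<rangle> = 0\<close> and so \<open>z = 0\<close>.\<close>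

lemma hollow_minkowski_gram_injective:
  fixes P R X Y z :: "nat \<Rightarrow> real"
  assumes J: "finite J" "2 \<le> card J"
    and timelike: "\<And>k. k \<in> J \<Longrightarrow> P k * R k - (X k)\<^sup>2 - (Y k)\<^sup>2 > 0"
    and kernel: "\<And>k. k \<in> J \<Longrightarrow>
      (\<Sum>j\<in>J. (if j = k then 0 else minkowski (P k) (R k) (X k) (Y k) (P j) (R j) (X j) (Y j)) * z j) = 0"
    and k: "k \<in> J"
  shows "z k = 0"
proof -
  define q where "q k = P k * R k - (X k)\<^sup>2 - (Y k)\<^sup>2" for k
  define WP WR WX WY where "WP = (\<Sum>j\<in>J. z j * P j)" and "WR = (\<Sum>j\<in>J. z j * R j)"
    and "WX = (\<Sum>j\<in>J. z j * X j)" and "WY = (\<Sum>j\<in>J. z j * Y j)"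
  define qw where "qw = minkowski WP WR WX WY WP WR WX WY"
  have proj: "minkowski (P k) (R k) (X k) (Y k) WP WR WX WY = z k * q k" if "k \<in> J" for k
    unfolding WP_def WR_def WX_def WY_def q_def by (rule minkowski_hollow_kernel[OF J(1) that kernel[OF that]])
  have "minkowski WP WR WX WY (\<Sum>j\<in>J. z j * P j) (\<Sum>j\<in>J. z j * R j) (\<Sum>j\<in>J. z j * X j) (\<Sum>j\<in>J. z j * Y j)
      = (\<Sum>k\<in>J. z k * minkowski WP WR WX WY (P k) (R k) (X k) (Y k))"
    by (rule minkowski_sum_right[OF J(1)])
  then have "qw = (\<Sum>k\<in>J. z k * minkowski WP WR WX WY (P k) (R k) (X k) (Y k))"
    unfolding qw_def WP_def[symmetric] WR_def[symmetric] WX_def[symmetric] WY_def[symmetric] .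
  also have "\<dots> = (\<Sum>k\<in>J. (z k)\<^sup>2 * q k)"
    using proj by (intro sum.cong refl) (simp add: minkowski_sym power2_eq_square)
  finally have qw: "qw = (\<Sum>k\<in>J. (z k)\<^sup>2 * q k)" .
  have q_pos: "q k > 0" if "k \<in> J" for k using timelike that q_def by simp
  have nonneg: "0 \<le> (z k)\<^sup>2 * q k" if "k \<in> J" for k using q_pos[OF that] by simp
  have bound: "qw \<le> (z k)\<^sup>2 * q k" if "k \<in> J" for k
  proof -
    have "q k * qw \<le> (minkowski (P k) (R k) (X k) (Y k) WP WR WX WY)\<^sup>2"
      using minkowski_reverse_cauchy_schwarz[OF timelike[OF that], of WP WR WX WY]
      by (simp only: q_def qw_def minkowski_self)
    also have "\<dots> = q k * ((z k)\<^sup>2 * q k)" by (simp add: proj[OF that] power2_eq_square)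
    finally show ?thesis using q_pos[OF that] by (simp add: mult_le_cancel_left_pos)
  qed
  have "(\<Sum>k\<in>J. qw) \<le> (\<Sum>k\<in>J. (z k)\<^sup>2 * q k)" by (rule sum_mono) (rule bound)
  then have "(of_nat (card J) - 1) * qw \<le> 0" using qw by (simp add: algebra_simps)
  moreover have "of_nat (card J) - 1 > (0::real)" using J(2) by simp
  ultimately have "qw \<le> 0" by (simp add: mult_le_0_iff)
  moreover have "0 \<le> qw" unfolding qw using nonneg by (rule sum_nonneg)
  ultimately have "(\<Sum>k\<in>J. (z k)\<^sup>2 * q k) = 0" using qw by simp
  then have "\<forall>k\<in>J. (z k)\<^sup>2 * q k = 0" using sum_nonneg_eq_0_iff[OF J(1) nonneg] by simp
  then have "(z k)\<^sup>2 * q k = 0" using k by blast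
  then show ?thesis using q_pos[OF k] by simp
qed

text \<open>\<open>hollow_det a b c d e f\<close> is the determinant of the symmetric matrix with zero diagonal and
  entries \<open>a, b, c\<close> (row 0), \<open>d, e\<close> (row 1), \<open>f\<close> (row 2) above it; \<open>hollow_adj\<close> is its adjugate.\<close>

definition hollow_det :: "'a::comm_ring_1 \<Rightarrow> 'a \<Rightarrow> 'a \<Rightarrow> 'a \<Rightarrow> 'a \<Rightarrow> 'a \<Rightarrow> 'a" where
  "hollow_det a b c d e f = c^2*d^2 - 2*b*c*d*e + b^2*e^2 - 2*a*c*d*f - 2*a*b*e*f + a^2*f^2"

definition hollow_adj :: "'a::comm_ring_1 \<Rightarrow> 'a \<Rightarrow> 'a \<Rightarrow> 'a \<Rightarrow> 'a \<Rightarrow> 'a \<Rightarrow> nat \<Rightarrow> nat \<Rightarrow> 'a" where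
  "hollow_adj a b c d e f i k = (
    if i = 0 \<and> k = 0 then 2*d*e*f
    else if (i = 0 \<and> k = 1) \<or> (i = 1 \<and> k = 0) then - c*d*f - b*e*f + a*f^2
    else if (i = 0 \<and> k = 2) \<or> (i = 2 \<and> k = 0) then - c*d*e + b*e^2 - a*e*f
    else if (i = 0 \<and> k = 3) \<or> (i = 3 \<and> k = 0) then c*d^2 - b*d*e - a*d*f
    else if i = 1 \<and> k = 1 then 2*b*c*f
    else if (i = 1 \<and> k = 2) \<or> (i = 2 \<and> k = 1) then c^2*d - b*c*e - a*c*f
    else if (i = 1 \<and> k = 3) \<or> (i = 3 \<and> k = 1) then - b*c*d + b^2*e - a*b*f
    else if i = 2 \<and> k = 2 then 2*a*c*e
    else if (i = 2 \<and> k = 3) \<or> (i = 3 \<and> k = 2) then - a*c*d - a*b*e + a^2*f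
    else 2*a*b*d)"

lemma hollow_det_of_real:
  "hollow_det (of_real a) (of_real b) (of_real c) (of_real d) (of_real e) (of_real f)
     = (of_real (hollow_det a b c d e f) :: complex)"
  by (simp add: hollow_det_def)

lemma hollow_det_reverse_half:
  "hollow_det (f / 2) (e / 2) (d / 2) (c / 2) (b / 2) (a / 2) = hollow_det a b c d e (f :: complex) / 16"
  unfolding hollow_det_def by (simp add: power2_eq_square divide_simps)

lemma hollow_adj_left_inverse:
  fixes a b c d e f x y z w :: "'a::comm_ring_1"
  defines "h \<equiv> hollow_adj a b c d e f"
  defines "r \<equiv> \<lambda>i. h i 0 * (a * y + b * z + c * w) + h i 1 * (a * x + d * z + e * w)
                  + h i 2 * (b * x + d * y + f * w) + h i 3 * (c * x + e * y + f * z)"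
  shows "hollow_det a b c d e f * x = r 0" "hollow_det a b c d e f * y = r 1"
    and "hollow_det a b c d e f * z = r 2" "hollow_det a b c d e f * w = r 3"
  unfolding h_def r_def hollow_adj_def hollow_det_def by (simp_all add: power2_eq_square algebra_simps)

lemma hollow_adj_right_inverse:
  fixes a b c d e f g0 g1 g2 g3 :: "'a::comm_ring_1"
  assumes y: "\<And>i. y i = hollow_adj a b c d e f i 0 * g0 + hollow_adj a b c d e f i 1 * g1
                          + hollow_adj a b c d e f i 2 * g2 + hollow_adj a b c d e f i 3 * g3"
  shows "a * y 1 + b * y 2 + c * y 3 = hollow_det a b c d e f * g0"
    and "a * y 0 + d * y 2 + e * y 3 = hollow_det a b c d e f * g1"
    and "b * y 0 + d * y 1 + f * y 3 = hollow_det a b c d e f * g2"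
    and "c * y 0 + e * y 1 + f * y 2 = hollow_det a b c d e f * g3"
  unfolding y hollow_adj_def hollow_det_def by (simp_all add: power2_eq_square algebra_simps)

lemma hollow_system_trivial_kernel:
  fixes a b c d e f x y z w :: "'a::field"
  assumes "hollow_det a b c d e f \<noteq> 0"
    and "a * y + b * z + c * w = 0" "a * x + d * z + e * w = 0"
    and "b * x + d * y + f * w = 0" "c * x + e * y + f * z = 0"
  shows "x = 0 \<and> y = 0 \<and> z = 0 \<and> w = 0"
proof -
  have "hollow_det a b c d e f * x = 0 \<and> hollow_det a b c d e f * y = 0
      \<and> hollow_det a b c d e f * z = 0 \<and> hollow_det a b c d e f * w = 0"
    using hollow_adj_left_inverse[where a = a and b = b and c = c and d = d and e = e and f = f
        and x = x and y = y and z = z and w = w]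
    unfolding assms(2-5) by simp
  then show ?thesis using assms(1) by simp
qed

lemma hollow_system_solvable:
  fixes a b c d e f g0 g1 g2 g3 :: "'a::field"
  assumes D: "hollow_det a b c d e f \<noteq> 0"
  obtains x0 x1 x2 x3
  where "a * x1 + b * x2 + c * x3 = g0" "a * x0 + d * x2 + e * x3 = g1"
    and "b * x0 + d * x1 + f * x3 = g2" "c * x0 + e * x1 + f * x2 = g3"
proof -
  let ?h = "hollow_adj a b c d e f"
  define y where "y i = ?h i 0 * g0 + ?h i 1 * g1 + ?h i 2 * g2 + ?h i 3 * g3" for i
  define x where "x i = y i / hollow_det a b c d e f" for i
  note eqs = hollow_adj_right_inverse[OF y_def]
  have "a * x 1 + b * x 2 + c * x 3 = g0" "a * x 0 + d * x 2 + e * x 3 = g1"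
    "b * x 0 + d * x 1 + f * x 3 = g2" "c * x 0 + e * x 1 + f * x 2 = g3"
    using D unfolding x_def times_divide_eq_right add_divide_distrib[symmetric] eqs by simp_all
  then show ?thesis using that by blast
qed

text \<open>If the determinant vanished, the first column of the adjugate would be a kernel vector;
  its first entry \<open>2 d e f\<close> does not vanish.\<close>

lemma hollow_det_minkowski_nonzero:
  fixes P R X Y :: "nat \<Rightarrow> real"
  assumes timelike: "\<And>k. k < 4 \<Longrightarrow> P k * R k - (X k)\<^sup>2 - (Y k)\<^sup>2 > 0"
  defines "g \<equiv> \<lambda>k j. minkowski (P k) (R k) (X k) (Y k) (P j) (R j) (X j) (Y j)"
  shows "hollow_det (g 0 1) (g 0 2) (g 0 3) (g 1 2) (g 1 3) (g 2 3) \<noteq> 0"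
proof
  assume D: "hollow_det (g 0 1) (g 0 2) (g 0 3) (g 1 2) (g 1 3) (g 2 3) = 0"
  have sym: "g k j = g j k" for k j unfolding g_def by (rule minkowski_sym)
  have nz: "g k j \<noteq> 0" if "k < 4" "j < 4" for k j
    unfolding g_def using timelike that by (simp add: minkowski_timelike_nonzero)
  define z where "z j = hollow_adj (g 0 1) (g 0 2) (g 0 3) (g 1 2) (g 1 3) (g 2 3) j 0" for j
  have kernel: "(\<Sum>j\<in>{..<4}. (if j = k then 0 else g k j) * z j) = 0" if k: "k \<in> {..<4}" for k
  proof -
    have 4: "{..<4::nat} = {0, 1, 2, 3}" by auto
    note expand = 4 sym[of 2 0] sym[of 3 0] sym[of 3 2] sym[of 1 0, simplified] sym[of 2 1, simplified]
      sym[of 3 1, simplified]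
    have "(\<Sum>j\<in>{..<4}. (if j = 0 then 0 else g 0 j) * z j) = 0"
      using D by (simp add: expand z_def hollow_adj_def hollow_det_def power2_eq_square algebra_simps)
    moreover have "(\<Sum>j\<in>{..<4}. (if j = 1 then 0 else g 1 j) * z j) = 0"
      by (simp add: expand z_def hollow_adj_def power2_eq_square algebra_simps)
    moreover have "(\<Sum>j\<in>{..<4}. (if j = 2 then 0 else g 2 j) * z j) = 0"
      by (simp add: expand z_def hollow_adj_def power2_eq_square algebra_simps)
    moreover have "(\<Sum>j\<in>{..<4}. (if j = 3 then 0 else g 3 j) * z j) = 0"
      by (simp add: expand z_def hollow_adj_def power2_eq_square algebra_simps)
    moreover have "k = 0 \<or> k = 1 \<or> k = 2 \<or> k = 3" using k by auto
    ultimately show ?thesis by (elim disjE) (simp_all only:)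
  qed
  have "z 0 = 0"
    by (rule hollow_minkowski_gram_injective[of "{..<4}" P R X Y])
       (use timelike kernel[unfolded g_def] in auto)
  moreover have "z 0 = 2 * g 1 2 * g 1 3 * g 2 3" by (simp add: z_def hollow_adj_def)
  ultimately show False using nz[of 1 2] nz[of 1 3] nz[of 2 3] by simp
qed

lemma det2_diag_forms:
  "det2 (\<lambda>i j. diag_form n A (b i j)) = form_subst (2 * n) (coframe n A) (det2 (\<lambda>i j. std_diag_form n (b i j)))"
proof -
  have "bounded_form (2 * n) (std_diag_form n c)" for c by (rule Vpq_bounded_form[OF std_diag_form_in_V11])
  then show ?thesis
    unfolding det2_def diag_form_eq_form_subst form_subst_diff
    by (simp add: form_subst_wedge one_form_coframe)
qed

lemma diag_form_hermitian_comb: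
  fixes \<theta> :: "nat \<Rightarrow> complex" and b :: "nat \<Rightarrow> nat \<Rightarrow> nat \<Rightarrow> complex"
  shows "(\<lambda>S. \<Sum>i<2. \<Sum>j<2. \<theta> i * diag_form n A (b i j) S * cnj (\<theta> j))
     = diag_form n A (\<lambda>l. \<Sum>i<2. \<Sum>j<2. \<theta> i * b i j l * cnj (\<theta> j))"
  unfolding diag_form_def sum_lessThan_2
  by (simp add: sum.distrib sum_distrib_left sum_distrib_right algebra_simps)

lemma griffiths_positive_diag_coeffs:
  assumes pos: "griffiths_positive n M" and A: "invertible_mat n A"
    and M: "\<forall>i<2. \<forall>j<2. M i j = diag_form n A (b i j)" and l: "l < n"
  shows "pos_hermitian2 (\<lambda>i j. b i j l)"
  unfolding pos_hermitian2_def
proof (intro allI impI)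
  fix \<theta> :: "nat \<Rightarrow> complex" assume "\<exists>i<2. \<theta> i \<noteq> 0"
  then have "kahler n (\<lambda>S. \<Sum>i<2. \<Sum>j<2. \<theta> i * M i j S * cnj (\<theta> j))"
    using pos unfolding griffiths_positive_def by blast
  also have "(\<lambda>S. \<Sum>i<2. \<Sum>j<2. \<theta> i * M i j S * cnj (\<theta> j))
      = diag_form n A (\<lambda>l. \<Sum>i<2. \<Sum>j<2. \<theta> i * b i j l * cnj (\<theta> j))"
    using M by (subst diag_form_hermitian_comb[symmetric]) (simp add: sum_lessThan_2)
  finally have "kahler n (diag_form n A (\<lambda>l. \<Sum>i<2. \<Sum>j<2. \<theta> i * b i j l * cnj (\<theta> j)))" .
  moreover obtain B where "mat_inverse n A B" using A by (auto simp: invertible_mat_iff_inverse)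
  ultimately show "\<exists>t>0. (\<Sum>i<2. \<Sum>j<2. \<theta> i * b i j l * cnj (\<theta> j)) = complex_of_real t"
    using kahler_diag_form_coeff_pos[OF _ _ l] by blast
qed

definition std_det_form :: "(nat \<Rightarrow> nat \<Rightarrow> nat \<Rightarrow> complex) \<Rightarrow> form" where
  "std_det_form b = det2 (\<lambda>i j. std_diag_form 4 (b i j))"

definition ordered_coeff :: "(nat \<Rightarrow> nat \<Rightarrow> nat \<Rightarrow> complex) \<Rightarrow> nat \<Rightarrow> nat \<Rightarrow> complex" where
  "ordered_coeff b l m = (if l = m then 0 else (b 0 0 l * b 1 1 m - b 0 1 l * b 1 0 m) / 4)"

lemma ordered_coeff_diag [simp]: "ordered_coeff b l l = 0"
  by (simp add: ordered_coeff_def)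

text \<open>\<open>pair_coeff b l m\<close> is the coefficient of the basis form
  \<open>dz\<^sub>l \<and> dz\<^sub>l bar \<and> dz\<^sub>m \<and> dz\<^sub>m bar\<close> in \<open>std_det_form b\<close>, up to sign; it is a quarter of the mixed
  discriminant of the Hermitian matrices \<open>b \<cdot> \<cdot> l\<close> and \<open>b \<cdot> \<cdot> m\<close>.\<close>

definition pair_coeff :: "(nat \<Rightarrow> nat \<Rightarrow> nat \<Rightarrow> complex) \<Rightarrow> nat \<Rightarrow> nat \<Rightarrow> complex" where
  "pair_coeff b l m = ordered_coeff b l m + ordered_coeff b m l"

lemma sum_lessThan_4: "(\<Sum>j<4::nat. f j) = f 0 + f 1 + f 2 + f 3"
  by (simp add: numeral_eq_Suc add_ac)

lemma std_diag_form_4_expand: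
  "std_diag_form 4 c = (\<lambda>S. \<Sum>l<4. (c l * (\<i> / 2)) * basis_form {l, 4 + l} S)"
proof -
  have "wedge (basis_form {l}) (basis_form {4 + l}) S = basis_form {l, 4 + l} S" if "l < 4" for l S
    using that by (simp add: wedge_basis_forms wsign_holo_antiholo) (auto simp: basis_form_def)
  then show ?thesis unfolding std_diag_form_def by (intro ext sum.cong refl) simp
qed

lemma wedge_diagonal_pairs:
  assumes l: "l < 4" and m: "m < 4"
  shows "wedge (basis_form {l, 4 + l}) (basis_form {m, 4 + m}) S
       = (if l = m then 0 else - basis_form {l, m, 4 + l, 4 + m} S)"
proof -
  have sign: "wsign {l, 4 + l} {m, 4 + m} = -1" if "l \<noteq> m"
  proof (cases "l < m")
    case True
    then have "inversions {l, 4 + l} {m, 4 + m} = {(4 + l, m)}"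
      using l m by (auto simp: inversions_def)
    then show ?thesis by (simp add: wsign_eq_inversions)
  next
    case False
    then have "inversions {l, 4 + l} {m, 4 + m} = {(l, m), (4 + l, m), (4 + l, 4 + m)}"
      using that l m by (auto simp: inversions_def)
    then show ?thesis by (simp add: wsign_eq_inversions)
  qed
  have disjoint: "({l, 4 + l} \<inter> {m, 4 + m} = {}) \<longleftrightarrow> l \<noteq> m" using l m by auto
  have union: "{l, 4 + l} \<union> {m, 4 + m} = {l, m, 4 + l, 4 + m}" by auto
  have "wedge (basis_form {l, 4 + l}) (basis_form {m, 4 + m}) S = (if {l, 4 + l} \<inter> {m, 4 + m} = {}
      \<and> S = {l, 4 + l} \<union> {m, 4 + m} then wsign {l, 4 + l} {m, 4 + m} else 0)"
    by (rule wedge_basis_forms) auto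
  then show ?thesis
    unfolding disjoint union by (cases "l = m") (simp_all add: sign basis_form_def)
qed

lemma std_det_form_expand:
  "std_det_form b = (\<lambda>S. \<Sum>l<4. \<Sum>m<4. ordered_coeff b l m * basis_form {l, m, 4 + l, 4 + m} S)"
proof
  fix S
  let ?w = "\<lambda>l m. wedge (basis_form {l, 4 + l}) (basis_form {m, 4 + m}) S"
  have "std_det_form b S = (\<Sum>l<4. \<Sum>m<4. (b 0 0 l * (\<i> / 2)) * (b 1 1 m * (\<i> / 2)) * ?w l m)
      - (\<Sum>l<4. \<Sum>m<4. (b 0 1 l * (\<i> / 2)) * (b 1 0 m * (\<i> / 2)) * ?w l m)"
    unfolding std_det_form_def det2_def std_diag_form_4_expand by (simp only: wedge_bilinear finite_lessThan)
  also have "\<dots> = (\<Sum>l<4. \<Sum>m<4. ordered_coeff b l m * basis_form {l, m, 4 + l, 4 + m} S)"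
    unfolding sum_subtractf[symmetric]
  proof (intro sum.cong refl)
    fix l m :: nat assume "l \<in> {..<4}" "m \<in> {..<4}"
    then have l: "l < 4" and m: "m < 4" by auto
    show "b 0 0 l * (\<i> / 2) * (b 1 1 m * (\<i> / 2)) * ?w l m - b 0 1 l * (\<i> / 2) * (b 1 0 m * (\<i> / 2)) * ?w l m
        = ordered_coeff b l m * basis_form {l, m, 4 + l, 4 + m} S"
      unfolding wedge_diagonal_pairs[OF l m] ordered_coeff_def by (simp add: field_simps)
  qed
  finally show "std_det_form b S = (\<Sum>l<4. \<Sum>m<4. ordered_coeff b l m * basis_form {l, m, 4 + l, 4 + m} S)" .
qed

lemma std_det_form_in_V22: "std_det_form b \<in> Vpq 4 2 2"
proof -
  have "det2 (\<lambda>i j. std_diag_form 4 (b i j)) \<in> Vpq 4 (1 + 1) (1 + 1)"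
    unfolding det2_def by (intro Vpq_diff wedge_in_Vpq std_diag_form_in_V11)
  then show ?thesis unfolding std_det_form_def one_add_one .
qed

lemma wedge_std_det_form:
  "wedge a (std_det_form b) S = (\<Sum>l<4. \<Sum>m<4. ordered_coeff b l m *
     (if {l, m, 4 + l, 4 + m} \<subseteq> S \<and> finite S
      then wsign (S - {l, m, 4 + l, 4 + m}) {l, m, 4 + l, 4 + m} * a (S - {l, m, 4 + l, 4 + m}) else 0))"
  unfolding std_det_form_expand
  by (simp add: wedge_sum_right wedge_scale_right wedge_basis_form_right conj_commute)

lemmas wedge_std_det_form_simps =
  wedge_std_det_form sum_lessThan_4 insert_Diff_if wsign_insert pair_coeff_def

lemma wedge_std_det_form_20:
  "wedge a (std_det_form b) {0, 1, 2, 3, 4, 5} = pair_coeff b 0 1 * a {2, 3}"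
  "wedge a (std_det_form b) {0, 1, 2, 3, 4, 6} = - pair_coeff b 0 2 * a {1, 3}"
  "wedge a (std_det_form b) {0, 1, 2, 3, 4, 7} = pair_coeff b 0 3 * a {1, 2}"
  "wedge a (std_det_form b) {0, 1, 2, 3, 5, 6} = pair_coeff b 1 2 * a {0, 3}"
  "wedge a (std_det_form b) {0, 1, 2, 3, 5, 7} = - pair_coeff b 1 3 * a {0, 2}"
  "wedge a (std_det_form b) {0, 1, 2, 3, 6, 7} = pair_coeff b 2 3 * a {0, 1}"
  by (simp_all add: wedge_std_det_form_simps algebra_simps)

lemma wedge_std_det_form_02:
  "wedge a (std_det_form b) {0, 1, 4, 5, 6, 7} = pair_coeff b 0 1 * a {6, 7}"
  "wedge a (std_det_form b) {0, 2, 4, 5, 6, 7} = - pair_coeff b 0 2 * a {5, 7}"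
  "wedge a (std_det_form b) {0, 3, 4, 5, 6, 7} = pair_coeff b 0 3 * a {5, 6}"
  "wedge a (std_det_form b) {1, 2, 4, 5, 6, 7} = pair_coeff b 1 2 * a {4, 7}"
  "wedge a (std_det_form b) {1, 3, 4, 5, 6, 7} = - pair_coeff b 1 3 * a {4, 6}"
  "wedge a (std_det_form b) {2, 3, 4, 5, 6, 7} = pair_coeff b 2 3 * a {4, 5}"
  by (simp_all add: wedge_std_det_form_simps algebra_simps)

lemma wedge_std_det_form_11:
  "wedge a (std_det_form b) {0, 1, 2, 4, 5, 7} = pair_coeff b 0 1 * a {2, 7}"
  "wedge a (std_det_form b) {0, 1, 2, 4, 6, 7} = - pair_coeff b 0 2 * a {1, 7}"
  "wedge a (std_det_form b) {0, 1, 2, 5, 6, 7} = pair_coeff b 1 2 * a {0, 7}"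
  "wedge a (std_det_form b) {0, 1, 3, 4, 5, 6} = pair_coeff b 0 1 * a {3, 6}"
  "wedge a (std_det_form b) {0, 1, 3, 4, 6, 7} = pair_coeff b 0 3 * a {1, 6}"
  "wedge a (std_det_form b) {0, 1, 3, 5, 6, 7} = - pair_coeff b 1 3 * a {0, 6}"
  "wedge a (std_det_form b) {0, 2, 3, 4, 5, 6} = - pair_coeff b 0 2 * a {3, 5}"
  "wedge a (std_det_form b) {0, 2, 3, 4, 5, 7} = pair_coeff b 0 3 * a {2, 5}"
  "wedge a (std_det_form b) {0, 2, 3, 5, 6, 7} = pair_coeff b 2 3 * a {0, 5}"
  "wedge a (std_det_form b) {1, 2, 3, 4, 5, 6} = pair_coeff b 1 2 * a {3, 4}"
  "wedge a (std_det_form b) {1, 2, 3, 4, 5, 7} = - pair_coeff b 1 3 * a {2, 4}"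
  "wedge a (std_det_form b) {1, 2, 3, 4, 6, 7} = pair_coeff b 2 3 * a {1, 4}"
  and wedge_std_det_form_11_diagonal:
  "wedge a (std_det_form b) {1, 2, 3, 5, 6, 7}
     = pair_coeff b 2 3 * a {1, 5} + pair_coeff b 1 3 * a {2, 6} + pair_coeff b 1 2 * a {3, 7}"
  "wedge a (std_det_form b) {0, 2, 3, 4, 6, 7}
     = pair_coeff b 2 3 * a {0, 4} + pair_coeff b 0 3 * a {2, 6} + pair_coeff b 0 2 * a {3, 7}"
  "wedge a (std_det_form b) {0, 1, 3, 4, 5, 7}
     = pair_coeff b 1 3 * a {0, 4} + pair_coeff b 0 3 * a {1, 5} + pair_coeff b 0 1 * a {3, 7}"
  "wedge a (std_det_form b) {0, 1, 2, 4, 5, 6}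
     = pair_coeff b 1 2 * a {0, 4} + pair_coeff b 0 2 * a {1, 5} + pair_coeff b 0 1 * a {2, 6}"
  by (simp_all add: wedge_std_det_form_simps algebra_simps)

definition support_sets :: "nat \<Rightarrow> nat \<Rightarrow> nat \<Rightarrow> nat set set" where
  "support_sets n p q = {S. S \<subseteq> {..<2 * n} \<and> card (S \<inter> {..<n}) = p \<and> card (S \<inter> {n..<2 * n}) = q}"

lemma Vpq_eqI:
  assumes "a \<in> Vpq n p q" "b \<in> Vpq n p q" "support_sets n p q \<subseteq> Ts" "\<forall>S\<in>Ts. a S = b S"
  shows "a = b"
proof
  fix S
  show "a S = b S"
  proof (cases "S \<in> support_sets n p q")
    case False
    then have "a S = 0" "b S = 0"
      using assms(1,2) unfolding Vpq_def support_sets_def by blast+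
    then show ?thesis by simp
  qed (use assms(3,4) in blast)
qed

lemma block_of_four_subset_cases:
  fixes k :: nat
  assumes "A \<subseteq> {k..<k + 4}"
  shows "card A = 0 \<Longrightarrow> A = {}"
    and "card A = 1 \<Longrightarrow> A = {k} \<or> A = {k + 1} \<or> A = {k + 2} \<or> A = {k + 3}"
    and "card A = 2 \<Longrightarrow> A = {k, k + 1} \<or> A = {k, k + 2} \<or> A = {k, k + 3} \<or> A = {k + 1, k + 2}
      \<or> A = {k + 1, k + 3} \<or> A = {k + 2, k + 3}"
    and "card A = 3 \<Longrightarrow> A = {k, k + 1, k + 2} \<or> A = {k, k + 1, k + 3} \<or> A = {k, k + 2, k + 3}
      \<or> A = {k + 1, k + 2, k + 3}"
    and "card A = 4 \<Longrightarrow> A = {k, k + 1, k + 2, k + 3}"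
proof -
  have "\<And>x. x \<in> A \<Longrightarrow> x = k \<or> x = k + 1 \<or> x = k + 2 \<or> x = k + 3" using assms by force
  then have "A = (if k \<in> A then {k} else {}) \<union> (if k + 1 \<in> A then {k + 1} else {})
      \<union> (if k + 2 \<in> A then {k + 2} else {}) \<union> (if k + 3 \<in> A then {k + 3} else {})"
    by (auto split: if_splits)
  then obtain b0 b1 b2 b3 where A: "A = (if b0 then {k} else {}) \<union> (if b1 then {k + 1} else {})
      \<union> (if b2 then {k + 2} else {}) \<union> (if b3 then {k + 3} else {})"
    by blast
  show "card A = 0 \<Longrightarrow> A = {}"
    and "card A = 1 \<Longrightarrow> A = {k} \<or> A = {k + 1} \<or> A = {k + 2} \<or> A = {k + 3}"
    and "card A = 2 \<Longrightarrow> A = {k, k + 1} \<or> A = {k, k + 2} \<or> A = {k, k + 3} \<or> A = {k + 1, k + 2}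
      \<or> A = {k + 1, k + 3} \<or> A = {k + 2, k + 3}"
    and "card A = 3 \<Longrightarrow> A = {k, k + 1, k + 2} \<or> A = {k, k + 1, k + 3} \<or> A = {k, k + 2, k + 3}
      \<or> A = {k + 1, k + 2, k + 3}"
    and "card A = 4 \<Longrightarrow> A = {k, k + 1, k + 2, k + 3}"
    unfolding A by (cases b0; cases b1; cases b2; cases b3; simp add: insert_commute)+
qed

lemma support_sets_4_split:
  assumes "S \<in> support_sets 4 p q"
  obtains A B where "S = A \<union> B" "A \<subseteq> {0..<0 + 4}" "card A = p" "B \<subseteq> {4..<4 + 4}" "card B = q"
proof
  show "S = S \<inter> {..<4} \<union> S \<inter> {4..<8}" using assms by (auto simp: support_sets_def)
qed (use assms in \<open>auto simp: support_sets_def\<close>)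

lemma support_sets_4_subsetI:
  assumes "\<And>A B. A \<subseteq> {0..<0 + 4} \<Longrightarrow> card A = p \<Longrightarrow> B \<subseteq> {4..<4 + 4} \<Longrightarrow> card B = q \<Longrightarrow> A \<union> B \<in> Ts"
  shows "support_sets 4 p q \<subseteq> Ts"
proof
  fix S assume "S \<in> support_sets 4 p q"
  then show "S \<in> Ts" by (rule support_sets_4_split) (use assms in blast)
qed

lemma support_sets_4_2_0:
  "support_sets 4 2 0 \<subseteq>
   {{0, 1}, {0, 2}, {0, 3}, {1, 2}, {1, 3}, {2, 3}}"
proof (rule support_sets_4_subsetI)
  fix A B :: "nat set"
  assume "A \<subseteq> {0..<0 + 4}" "card A = 2" "B \<subseteq> {4..<4 + 4}" "card B = 0"
  from block_of_four_subset_cases(3)[OF this(1,2)] block_of_four_subset_cases(1)[OF this(3,4)]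
  show "A \<union> B \<in> {{0, 1}, {0, 2}, {0, 3}, {1, 2}, {1, 3}, {2, 3}}"
    by (elim disjE) (simp_all add: numeral_eq_Suc insert_commute)
qed

lemma support_sets_4_4_2:
  "support_sets 4 4 2 \<subseteq>
   {{0, 1, 2, 3, 4, 5}, {0, 1, 2, 3, 4, 6}, {0, 1, 2, 3, 4, 7},
    {0, 1, 2, 3, 5, 6}, {0, 1, 2, 3, 5, 7}, {0, 1, 2, 3, 6, 7}}"
proof (rule support_sets_4_subsetI)
  fix A B :: "nat set"
  assume "A \<subseteq> {0..<0 + 4}" "card A = 4" "B \<subseteq> {4..<4 + 4}" "card B = 2"
  from block_of_four_subset_cases(5)[OF this(1,2)] block_of_four_subset_cases(3)[OF this(3,4)]
  show "A \<union> B \<in> {{0, 1, 2, 3, 4, 5}, {0, 1, 2, 3, 4, 6}, {0, 1, 2, 3, 4, 7},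
    {0, 1, 2, 3, 5, 6}, {0, 1, 2, 3, 5, 7}, {0, 1, 2, 3, 6, 7}}"
    by (elim disjE) (simp_all add: numeral_eq_Suc insert_commute)
qed

lemma support_sets_4_1_1:
  "support_sets 4 1 1 \<subseteq>
   {{0, 4}, {0, 5}, {0, 6}, {0, 7}, {1, 4}, {1, 5}, {1, 6}, {1, 7},
    {2, 4}, {2, 5}, {2, 6}, {2, 7}, {3, 4}, {3, 5}, {3, 6}, {3, 7}}"
proof (rule support_sets_4_subsetI)
  fix A B :: "nat set"
  assume "A \<subseteq> {0..<0 + 4}" "card A = 1" "B \<subseteq> {4..<4 + 4}" "card B = 1"
  from block_of_four_subset_cases(2)[OF this(1,2)] block_of_four_subset_cases(2)[OF this(3,4)]
  show "A \<union> B \<in> {{0, 4}, {0, 5}, {0, 6}, {0, 7}, {1, 4}, {1, 5}, {1, 6}, {1, 7},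
    {2, 4}, {2, 5}, {2, 6}, {2, 7}, {3, 4}, {3, 5}, {3, 6}, {3, 7}}"
    by (elim disjE) (simp_all add: numeral_eq_Suc insert_commute)
qed

lemma support_sets_4_3_3:
  "support_sets 4 3 3 \<subseteq>
   {{0, 1, 2, 4, 5, 6}, {0, 1, 2, 4, 5, 7}, {0, 1, 2, 4, 6, 7}, {0, 1, 2, 5, 6, 7},
    {0, 1, 3, 4, 5, 6}, {0, 1, 3, 4, 5, 7}, {0, 1, 3, 4, 6, 7}, {0, 1, 3, 5, 6, 7},
    {0, 2, 3, 4, 5, 6}, {0, 2, 3, 4, 5, 7}, {0, 2, 3, 4, 6, 7}, {0, 2, 3, 5, 6, 7},
    {1, 2, 3, 4, 5, 6}, {1, 2, 3, 4, 5, 7}, {1, 2, 3, 4, 6, 7}, {1, 2, 3, 5, 6, 7}}"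
proof (rule support_sets_4_subsetI)
  fix A B :: "nat set"
  assume "A \<subseteq> {0..<0 + 4}" "card A = 3" "B \<subseteq> {4..<4 + 4}" "card B = 3"
  from block_of_four_subset_cases(4)[OF this(1,2)] block_of_four_subset_cases(4)[OF this(3,4)]
  show "A \<union> B \<in> {{0, 1, 2, 4, 5, 6}, {0, 1, 2, 4, 5, 7}, {0, 1, 2, 4, 6, 7}, {0, 1, 2, 5, 6, 7},
    {0, 1, 3, 4, 5, 6}, {0, 1, 3, 4, 5, 7}, {0, 1, 3, 4, 6, 7}, {0, 1, 3, 5, 6, 7},
    {0, 2, 3, 4, 5, 6}, {0, 2, 3, 4, 5, 7}, {0, 2, 3, 4, 6, 7}, {0, 2, 3, 5, 6, 7},
    {1, 2, 3, 4, 5, 6}, {1, 2, 3, 4, 5, 7}, {1, 2, 3, 4, 6, 7}, {1, 2, 3, 5, 6, 7}}"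
    by (elim disjE) (simp_all add: numeral_eq_Suc insert_commute)
qed

lemma support_sets_4_0_2:
  "support_sets 4 0 2 \<subseteq>
   {{4, 5}, {4, 6}, {4, 7}, {5, 6}, {5, 7}, {6, 7}}"
proof (rule support_sets_4_subsetI)
  fix A B :: "nat set"
  assume "A \<subseteq> {0..<0 + 4}" "card A = 0" "B \<subseteq> {4..<4 + 4}" "card B = 2"
  from block_of_four_subset_cases(1)[OF this(1,2)] block_of_four_subset_cases(3)[OF this(3,4)]
  show "A \<union> B \<in> {{4, 5}, {4, 6}, {4, 7}, {5, 6}, {5, 7}, {6, 7}}"
    by (elim disjE) (simp_all add: numeral_eq_Suc insert_commute)
qed

lemma support_sets_4_2_4:
  "support_sets 4 2 4 \<subseteq>
   {{0, 1, 4, 5, 6, 7}, {0, 2, 4, 5, 6, 7}, {0, 3, 4, 5, 6, 7},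
    {1, 2, 4, 5, 6, 7}, {1, 3, 4, 5, 6, 7}, {2, 3, 4, 5, 6, 7}}"
proof (rule support_sets_4_subsetI)
  fix A B :: "nat set"
  assume "A \<subseteq> {0..<0 + 4}" "card A = 2" "B \<subseteq> {4..<4 + 4}" "card B = 4"
  from block_of_four_subset_cases(3)[OF this(1,2)] block_of_four_subset_cases(5)[OF this(3,4)]
  show "A \<union> B \<in> {{0, 1, 4, 5, 6, 7}, {0, 2, 4, 5, 6, 7}, {0, 3, 4, 5, 6, 7},
    {1, 2, 4, 5, 6, 7}, {1, 3, 4, 5, 6, 7}, {2, 3, 4, 5, 6, 7}}"
    by (elim disjE) (simp_all add: numeral_eq_Suc insert_commute)
qed

definition form_of_coeffs :: "(nat set \<times> complex) list \<Rightarrow> form" where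
  "form_of_coeffs cs = (\<lambda>T. \<Sum>(U, c)\<leftarrow>cs. if U = T then c else 0)"

lemma form_of_coeffs_in_Vpq:
  "(\<And>U c. (U, c) \<in> set cs \<Longrightarrow> U \<in> support_sets n p q) \<Longrightarrow> form_of_coeffs cs \<in> Vpq n p q"
proof (induct cs)
  case Nil
  then show ?case by (simp add: form_of_coeffs_def)
next
  case (Cons uc cs)
  obtain U c where uc: "uc = (U, c)" by fastforce
  have "(\<lambda>T. if U = T then c else 0) \<in> Vpq n p q"
    using Cons.prems[of U c] by (auto simp: uc Vpq_def support_sets_def)
  moreover have "form_of_coeffs cs \<in> Vpq n p q" using Cons.prems by (intro Cons.hyps) auto
  ultimately show ?case
    using Vpq_add by (fastforce simp: form_of_coeffs_def uc)
qed

lemma bij_betw_wedgeI: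
  assumes maps: "\<And>\<beta>. \<beta> \<in> Vpq n p q \<Longrightarrow> wedge \<beta> \<Omega> \<in> Vpq n p' q'"
    and inj: "\<And>\<delta>. \<delta> \<in> Vpq n p q \<Longrightarrow> (\<And>S. wedge \<delta> \<Omega> S = 0) \<Longrightarrow> \<delta> = (\<lambda>S. 0)"
    and surj: "\<And>\<gamma>. \<gamma> \<in> Vpq n p' q' \<Longrightarrow> \<exists>\<beta>\<in>Vpq n p q. wedge \<beta> \<Omega> = \<gamma>"
  shows "bij_betw (\<lambda>\<alpha>. wedge \<alpha> \<Omega>) (Vpq n p q) (Vpq n p' q')"
proof (rule bij_betwI')
  fix x y assume x: "x \<in> Vpq n p q" and y: "y \<in> Vpq n p q"
  show "(wedge x \<Omega> = wedge y \<Omega>) = (x = y)"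
  proof
    assume "wedge x \<Omega> = wedge y \<Omega>"
    then have "(\<lambda>S. x S - y S) = (\<lambda>S. 0)"
      by (intro inj[OF Vpq_diff[OF x y]]) (simp add: wedge_diff_left)
    then show "x = y" by (simp add: fun_eq_iff)
  qed simp
qed (use maps surj in auto)

lemma bij_wedge_std_det_form_20:
  assumes nz: "\<And>l m. l < 4 \<Longrightarrow> m < 4 \<Longrightarrow> l \<noteq> m \<Longrightarrow> pair_coeff b l m \<noteq> 0"
  shows "bij_betw (\<lambda>\<alpha>. wedge \<alpha> (std_det_form b)) (Vpq 4 2 0) (Vpq 4 4 2)"
proof (rule bij_betw_wedgeI)
  have c: "pair_coeff b 0 1 \<noteq> 0" "pair_coeff b 0 2 \<noteq> 0" "pair_coeff b 0 3 \<noteq> 0"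
    "pair_coeff b 1 2 \<noteq> 0" "pair_coeff b 1 3 \<noteq> 0" "pair_coeff b 2 3 \<noteq> 0" by (simp_all add: nz)
  show maps: "wedge \<beta> (std_det_form b) \<in> Vpq 4 4 2" if "\<beta> \<in> Vpq 4 2 0" for \<beta>
    using wedge_in_Vpq[OF that std_det_form_in_V22] by (simp add: numeral_eq_Suc)
  show "\<delta> = (\<lambda>S. 0)" if \<delta>: "\<delta> \<in> Vpq 4 2 0" and z: "\<And>S. wedge \<delta> (std_det_form b) S = 0" for \<delta>
    using wedge_std_det_form_20[of \<delta> b] c z by (intro Vpq_eqI[OF \<delta> Vpq_zero support_sets_4_2_0]) simp
  show "\<exists>\<beta>\<in>Vpq 4 2 0. wedge \<beta> (std_det_form b) = \<gamma>" if \<gamma>: "\<gamma> \<in> Vpq 4 4 2" for \<gamma>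
  proof
    let ?\<beta> = "form_of_coeffs
       [({2, 3}, \<gamma> {0, 1, 2, 3, 4, 5} / pair_coeff b 0 1),
        ({1, 3}, -\<gamma> {0, 1, 2, 3, 4, 6} / pair_coeff b 0 2),
        ({1, 2}, \<gamma> {0, 1, 2, 3, 4, 7} / pair_coeff b 0 3),
        ({0, 3}, \<gamma> {0, 1, 2, 3, 5, 6} / pair_coeff b 1 2),
        ({0, 2}, -\<gamma> {0, 1, 2, 3, 5, 7} / pair_coeff b 1 3),
        ({0, 1}, \<gamma> {0, 1, 2, 3, 6, 7} / pair_coeff b 2 3)]"
    show \<beta>: "?\<beta> \<in> Vpq 4 2 0" by (rule form_of_coeffs_in_Vpq) (auto simp: support_sets_def)
    show "wedge ?\<beta> (std_det_form b) = \<gamma>"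
      using wedge_std_det_form_20[of ?\<beta> b] c
      by (intro Vpq_eqI[OF maps[OF \<beta>] \<gamma> support_sets_4_4_2]) (simp add: form_of_coeffs_def set_eq_subset)
  qed
qed

lemma bij_wedge_std_det_form_02:
  assumes nz: "\<And>l m. l < 4 \<Longrightarrow> m < 4 \<Longrightarrow> l \<noteq> m \<Longrightarrow> pair_coeff b l m \<noteq> 0"
  shows "bij_betw (\<lambda>\<alpha>. wedge \<alpha> (std_det_form b)) (Vpq 4 0 2) (Vpq 4 2 4)"
proof (rule bij_betw_wedgeI)
  have c: "pair_coeff b 0 1 \<noteq> 0" "pair_coeff b 0 2 \<noteq> 0" "pair_coeff b 0 3 \<noteq> 0"
    "pair_coeff b 1 2 \<noteq> 0" "pair_coeff b 1 3 \<noteq> 0" "pair_coeff b 2 3 \<noteq> 0" by (simp_all add: nz)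
  show maps: "wedge \<beta> (std_det_form b) \<in> Vpq 4 2 4" if "\<beta> \<in> Vpq 4 0 2" for \<beta>
    using wedge_in_Vpq[OF that std_det_form_in_V22] by (simp add: numeral_eq_Suc)
  show "\<delta> = (\<lambda>S. 0)" if \<delta>: "\<delta> \<in> Vpq 4 0 2" and z: "\<And>S. wedge \<delta> (std_det_form b) S = 0" for \<delta>
    using wedge_std_det_form_02[of \<delta> b] c z by (intro Vpq_eqI[OF \<delta> Vpq_zero support_sets_4_0_2]) simp
  show "\<exists>\<beta>\<in>Vpq 4 0 2. wedge \<beta> (std_det_form b) = \<gamma>" if \<gamma>: "\<gamma> \<in> Vpq 4 2 4" for \<gamma>
  proof
    let ?\<beta> = "form_of_coeffs
       [({6, 7}, \<gamma> {0, 1, 4, 5, 6, 7} / pair_coeff b 0 1),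
        ({5, 7}, -\<gamma> {0, 2, 4, 5, 6, 7} / pair_coeff b 0 2),
        ({5, 6}, \<gamma> {0, 3, 4, 5, 6, 7} / pair_coeff b 0 3),
        ({4, 7}, \<gamma> {1, 2, 4, 5, 6, 7} / pair_coeff b 1 2),
        ({4, 6}, -\<gamma> {1, 3, 4, 5, 6, 7} / pair_coeff b 1 3),
        ({4, 5}, \<gamma> {2, 3, 4, 5, 6, 7} / pair_coeff b 2 3)]"
    show \<beta>: "?\<beta> \<in> Vpq 4 0 2" by (rule form_of_coeffs_in_Vpq) (auto simp: support_sets_def)
    show "wedge ?\<beta> (std_det_form b) = \<gamma>"
      using wedge_std_det_form_02[of ?\<beta> b] c
      by (intro Vpq_eqI[OF maps[OF \<beta>] \<gamma> support_sets_4_2_4]) (simp add: form_of_coeffs_def set_eq_subset)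
  qed
qed

lemma wedge_std_det_form_onto_33:
  assumes nz: "\<And>l m. l < 4 \<Longrightarrow> m < 4 \<Longrightarrow> l \<noteq> m \<Longrightarrow> pair_coeff b l m \<noteq> 0"
    and D: "hollow_det (pair_coeff b 2 3) (pair_coeff b 1 3) (pair_coeff b 1 2)
              (pair_coeff b 0 3) (pair_coeff b 0 2) (pair_coeff b 0 1) \<noteq> 0"
    and \<gamma>: "\<gamma> \<in> Vpq 4 3 3"
  shows "\<exists>\<beta>\<in>Vpq 4 1 1. wedge \<beta> (std_det_form b) = \<gamma>"
proof -
  have c: "pair_coeff b 0 1 \<noteq> 0" "pair_coeff b 0 2 \<noteq> 0" "pair_coeff b 0 3 \<noteq> 0"
    "pair_coeff b 1 2 \<noteq> 0" "pair_coeff b 1 3 \<noteq> 0" "pair_coeff b 2 3 \<noteq> 0" by (simp_all add: nz)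
  obtain x y z w where diagonal:
    "pair_coeff b 2 3 * y + pair_coeff b 1 3 * z + pair_coeff b 1 2 * w = \<gamma> {1, 2, 3, 5, 6, 7}"
    "pair_coeff b 2 3 * x + pair_coeff b 0 3 * z + pair_coeff b 0 2 * w = \<gamma> {0, 2, 3, 4, 6, 7}"
    "pair_coeff b 1 3 * x + pair_coeff b 0 3 * y + pair_coeff b 0 1 * w = \<gamma> {0, 1, 3, 4, 5, 7}"
    "pair_coeff b 1 2 * x + pair_coeff b 0 2 * y + pair_coeff b 0 1 * z = \<gamma> {0, 1, 2, 4, 5, 6}"
    by (rule hollow_system_solvable[OF D])
  let ?\<beta> = "form_of_coeffs
     [({2, 7}, \<gamma> {0, 1, 2, 4, 5, 7} / pair_coeff b 0 1),
      ({1, 7}, -\<gamma> {0, 1, 2, 4, 6, 7} / pair_coeff b 0 2),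
      ({0, 7}, \<gamma> {0, 1, 2, 5, 6, 7} / pair_coeff b 1 2),
      ({3, 6}, \<gamma> {0, 1, 3, 4, 5, 6} / pair_coeff b 0 1),
      ({1, 6}, \<gamma> {0, 1, 3, 4, 6, 7} / pair_coeff b 0 3),
      ({0, 6}, -\<gamma> {0, 1, 3, 5, 6, 7} / pair_coeff b 1 3),
      ({3, 5}, -\<gamma> {0, 2, 3, 4, 5, 6} / pair_coeff b 0 2),
      ({2, 5}, \<gamma> {0, 2, 3, 4, 5, 7} / pair_coeff b 0 3),
      ({0, 5}, \<gamma> {0, 2, 3, 5, 6, 7} / pair_coeff b 2 3),
      ({3, 4}, \<gamma> {1, 2, 3, 4, 5, 6} / pair_coeff b 1 2),
      ({2, 4}, -\<gamma> {1, 2, 3, 4, 5, 7} / pair_coeff b 1 3),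
      ({1, 4}, \<gamma> {1, 2, 3, 4, 6, 7} / pair_coeff b 2 3),
      ({0, 4}, x), ({1, 5}, y), ({2, 6}, z), ({3, 7}, w)]"
  have \<beta>: "?\<beta> \<in> Vpq 4 1 1" by (rule form_of_coeffs_in_Vpq) (auto simp: support_sets_def)
  have "wedge ?\<beta> (std_det_form b) \<in> Vpq 4 3 3"
    using wedge_in_Vpq[OF \<beta> std_det_form_in_V22] by (simp add: numeral_eq_Suc)
  from Vpq_eqI[OF this \<gamma> support_sets_4_3_3] have "wedge ?\<beta> (std_det_form b) = \<gamma>"
    using wedge_std_det_form_11[of ?\<beta> b] wedge_std_det_form_11_diagonal[of ?\<beta> b] diagonal c
    by (simp add: form_of_coeffs_def set_eq_subset)
  then show ?thesis using \<beta> by blast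
qed

lemma bij_wedge_std_det_form_11:
  assumes nz: "\<And>l m. l < 4 \<Longrightarrow> m < 4 \<Longrightarrow> l \<noteq> m \<Longrightarrow> pair_coeff b l m \<noteq> 0"
    and D: "hollow_det (pair_coeff b 2 3) (pair_coeff b 1 3) (pair_coeff b 1 2)
              (pair_coeff b 0 3) (pair_coeff b 0 2) (pair_coeff b 0 1) \<noteq> 0"
  shows "bij_betw (\<lambda>\<alpha>. wedge \<alpha> (std_det_form b)) (Vpq 4 1 1) (Vpq 4 3 3)"
proof (rule bij_betw_wedgeI)
  have c: "pair_coeff b 0 1 \<noteq> 0" "pair_coeff b 0 2 \<noteq> 0" "pair_coeff b 0 3 \<noteq> 0"
    "pair_coeff b 1 2 \<noteq> 0" "pair_coeff b 1 3 \<noteq> 0" "pair_coeff b 2 3 \<noteq> 0" by (simp_all add: nz)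
  show "wedge \<beta> (std_det_form b) \<in> Vpq 4 3 3" if "\<beta> \<in> Vpq 4 1 1" for \<beta>
    using wedge_in_Vpq[OF that std_det_form_in_V22] by (simp add: numeral_eq_Suc)
  show "\<delta> = (\<lambda>S. 0)" if \<delta>: "\<delta> \<in> Vpq 4 1 1" and z: "\<And>S. wedge \<delta> (std_det_form b) S = 0" for \<delta>
  proof -
    have "\<delta> {0, 4} = 0 \<and> \<delta> {1, 5} = 0 \<and> \<delta> {2, 6} = 0 \<and> \<delta> {3, 7} = 0"
      using wedge_std_det_form_11_diagonal[of \<delta> b] z
      by (intro hollow_system_trivial_kernel[OF D]) (simp_all add: algebra_simps)
    then show ?thesis
      using wedge_std_det_form_11[of \<delta> b] c z by (intro Vpq_eqI[OF \<delta> Vpq_zero support_sets_4_1_1]) simp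
  qed
qed (rule wedge_std_det_form_onto_33[OF nz D])

lemma pair_coeff_eq_minkowski:
  assumes "\<And>k. k \<in> {l, m} \<Longrightarrow> Im (b 0 0 k) = 0 \<and> Im (b 1 1 k) = 0 \<and> b 1 0 k = cnj (b 0 1 k)"
    and "l \<noteq> m"
  shows "pair_coeff b l m = complex_of_real (minkowski
      (Re (b 0 0 l)) (Re (b 1 1 l)) (Re (b 0 1 l)) (Im (b 0 1 l))
      (Re (b 0 0 m)) (Re (b 1 1 m)) (Re (b 0 1 m)) (Im (b 0 1 m))) / 2"
  using assms(1)[of l] assms(1)[of m] assms(2)
  by (simp add: pair_coeff_def ordered_coeff_def minkowski_def complex_eq_iff field_simps)

lemma pair_coeff_nondegenerate:
  assumes herm: "\<And>l. l < 4 \<Longrightarrow> pos_hermitian2 (\<lambda>i j. b i j l)"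
  shows "\<And>l m. l < 4 \<Longrightarrow> m < 4 \<Longrightarrow> l \<noteq> m \<Longrightarrow> pair_coeff b l m \<noteq> 0"
    and "hollow_det (pair_coeff b 2 3) (pair_coeff b 1 3) (pair_coeff b 1 2)
           (pair_coeff b 0 3) (pair_coeff b 0 2) (pair_coeff b 0 1) \<noteq> 0"
proof -
  define P R X Y where "P k = Re (b 0 0 k)" and "R k = Re (b 1 1 k)"
    and "X k = Re (b 0 1 k)" and "Y k = Im (b 0 1 k)" for k
  define g where "g k j = minkowski (P k) (R k) (X k) (Y k) (P j) (R j) (X j) (Y j)" for k j
  have timelike: "P k * R k - (X k)\<^sup>2 - (Y k)\<^sup>2 > 0" if "k < 4" for k
    using pos_hermitian2D(4)[OF herm[OF that]] by (simp add: P_def R_def X_def Y_def)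
  have pair: "pair_coeff b l m = complex_of_real (g l m) / 2" if "l < 4" "m < 4" "l \<noteq> m" for l m
    using that pos_hermitian2D(1-3)[OF herm] unfolding g_def P_def R_def X_def Y_def
    by (intro pair_coeff_eq_minkowski) auto
  show "pair_coeff b l m \<noteq> 0" if "l < 4" "m < 4" "l \<noteq> m" for l m
  proof -
    have "g l m \<noteq> 0"
      unfolding g_def by (rule minkowski_timelike_nonzero[OF timelike[OF that(1)] timelike[OF that(2)]])
    then show ?thesis by (simp add: pair[OF that])
  qed
  have "hollow_det (g 0 1) (g 0 2) (g 0 3) (g 1 2) (g 1 3) (g 2 3) \<noteq> 0"
    unfolding g_def using timelike by (rule hollow_det_minkowski_nonzero)
  then show "hollow_det (pair_coeff b 2 3) (pair_coeff b 1 3) (pair_coeff b 1 2)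
      (pair_coeff b 0 3) (pair_coeff b 0 2) (pair_coeff b 0 1) \<noteq> 0"
    by (simp add: pair hollow_det_reverse_half hollow_det_of_real)
qed

lemma std_det_form_lefschetz:
  assumes "\<And>l. l < 4 \<Longrightarrow> pos_hermitian2 (\<lambda>i j. b i j l)"
  shows "lefschetz 4 2 (std_det_form b) 2 0 \<and> lefschetz 4 2 (std_det_form b) 1 1
    \<and> lefschetz 4 2 (std_det_form b) 0 2"
  using bij_wedge_std_det_form_20 bij_wedge_std_det_form_11 bij_wedge_std_det_form_02
    pair_coeff_nondegenerate[OF assms] std_det_form_in_V22
  by (simp add: lefschetz_def)

theorem mainTheorem12:
  fixes M :: "nat \<Rightarrow> nat \<Rightarrow> form"
  assumes "form_matrix2 4 M"
    and "griffiths_positive 4 M"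
    and "diagonalized_entries 4 M"
  shows "lefschetz 4 2 (det2 M) 2 0 \<and> lefschetz 4 2 (det2 M) 1 1 \<and> lefschetz 4 2 (det2 M) 0 2"
proof -
  obtain A b where A: "invertible_mat 4 A" and M: "\<forall>i<2. \<forall>j<2. M i j = diag_form 4 A (b i j)"
    using assms(3) unfolding diagonalized_entries_def by blast
  have "pos_hermitian2 (\<lambda>i j. b i j l)" if "l < 4" for l
    using griffiths_positive_diag_coeffs[OF assms(2) A M that] .
  then have std: "lefschetz 4 2 (std_det_form b) 2 0 \<and> lefschetz 4 2 (std_det_form b) 1 1
      \<and> lefschetz 4 2 (std_det_form b) 0 2"
    by (rule std_det_form_lefschetz)
  have "det2 M = form_subst (2 * 4) (coframe 4 A) (std_det_form b)"
    using M det2_diag_forms[of 4 A b] by (simp add: det2_def std_det_form_def)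
  then show ?thesis using std lefschetz_coordinate_change[OF A] by simp
qed

end
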